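(* There is an absolute constant $C>0$ such that for every $e_1$-gate graph $G$, $\gamma\big(A(G^{\rm SL})-e_1\big)\ge C\,\gamma\big(A(G)-e_1\big)$.
   Context: For a positive semidefinite matrix $M$, $\gamma(M)$ denotes its smallest nonzero eigenvalue. Let $g_0$ be a fixed $128$-vertex simple graph with vertices labeled $(z,t,j)$, $z\in\{0,1\}$, $t\in[8]$, $j\in\{0,\dots,7\}$, whose adjacency matrix $A(g_0)$ has smallest eigenvalue $e_1=-1-3\sqrt2$, with the corresponding eigenspace having orthonormal basis $|\psi_{z,0}\rangle=\frac{1}{\sqrt8}\big(|z\rangle(|1\rangle+|3\rangle+|5\rangle+|7\rangle)+H|z\rangle(|2\rangle+|8\rangle)+HT|z\rangle(|4\rangle+|6\rangle)\big)|\omega\rangle$ and $|\psi_{z,1}\rangle=|\psi_{z,0}\rangle^*$, where $H=\frac1{\sqrt2}\begin{pmatrix}1&1\\1&-1\end{pmatrix}$, $T=\mathrm{diag}(1,e^{i\pi/4})$, $|\omega\rangle=\frac1{\sqrt8}\sum_{j=0}^7 e^{-i\pi j/4}|j\rangle$. A gate diagram consists of $R$ diagram elements $q\in[R]$, each with a label $U_q\in\{1,H,HT\}$ and node set $\{(q,z,t): z\in\{0,1\},\ t\in\{1,3\}\cup T(U_q)\}$, where $T(H)=\{2,8\}$, $T(HT)=\{4,6\}$, $T(1)=\{5,7\}$; together with a set $\mathcal S$ of nodes and a set $\mathcal E$ of unordered pairs of nodes, such that each node belongs to at most one element of $\mathcal S$ or pair of $\mathcal E$. The associated gate graph $G$ has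 vertices $(q,z,t,j)$ and adjacency matrix $A(G)=1_q\otimes A(g_0)+h_{\mathcal S}+h_{\mathcal E}$, with $h_{\mathcal S}=\sum_{(q,z,t)\in\mathcal S}|q,z,t\rangle\langle q,z,t|\otimes 1_j$ and $h_{\mathcal E}=\sum_{\{(q,z,t),(q',z',t')\}\in\mathcal E}(|q,z,t\rangle+|q',z',t'\rangle)(\langle q,z,t|+\langle q',z',t'|)\otimes 1_j$. $G$ is an $e_1$-gate graph if the smallest eigenvalue of $A(G)$ equals $e_1$. Let $\mathcal N=\{(q,z,t,j): (q,z,t)\notin\mathcal S \text{ and } (q,z,t) \text{ belongs to no pair in } \mathcal E\}$, $\Pi_{\mathcal N}=\sum_{v\in\mathcal N}|v\rangle\langle v|$, and $\Pi_+=|+\rangle\langle+|$ with $|+\rangle=\frac1{\sqrt2}(|0\rangle+|1\rangle)$. The graph $G^{\rm SL}$ has vertex set $V(G)\times\{0,1\}$ and adjacency matrix $A(G^{\rm SL})=A(G)\otimes 1_d+2\,\Pi_{\mathcal N}\otimes\Pi_+$. *)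

theory Defs
  imports Complex_Main
begin

text \<open>A matrix on a finite index set V is a function M :: 'v => 'v => real (entries outside V
  are irrelevant). Eigenvectors are taken over the complex numbers, supported on V.\<close>

definition in_eigenspace :: "'v set \<Rightarrow> ('v \<Rightarrow> 'v \<Rightarrow> real) \<Rightarrow> complex \<Rightarrow> ('v \<Rightarrow> complex) \<Rightarrow> bool" where
  "in_eigenspace V M \<mu> x \<longleftrightarrow> (\<forall>v. v \<notin> V \<longrightarrow> x v = 0) \<and>
     (\<forall>u\<in>V. (\<Sum>w\<in>V. complex_of_real (M u w) * x w) = \<mu> * x u)"

definition is_eigenvalue :: "'v set \<Rightarrow> ('v \<Rightarrow> 'v \<Rightarrow> real) \<Rightarrow> complex \<Rightarrow> bool" where
  "is_eigenvalue V M \<mu> \<longleftrightarrow> (\<exists>x. in_eigenspace V M \<mu> x \<and> (\<exists>v\<in>V. x v \<noteq> 0))"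

definition smallest_eigenvalue :: "'v set \<Rightarrow> ('v \<Rightarrow> 'v \<Rightarrow> real) \<Rightarrow> real \<Rightarrow> bool" where
  "smallest_eigenvalue V M e \<longleftrightarrow> is_eigenvalue V M (complex_of_real e) \<and>
     (\<forall>\<mu>. is_eigenvalue V M \<mu> \<longrightarrow> e \<le> Re \<mu>)"

definition gamma :: "'v set \<Rightarrow> ('v \<Rightarrow> 'v \<Rightarrow> real) \<Rightarrow> real" where
  "gamma V M = Min {x::real. x \<noteq> 0 \<and> is_eigenvalue V M (complex_of_real x)}"

definition shift :: "('v \<Rightarrow> 'v \<Rightarrow> real) \<Rightarrow> real \<Rightarrow> ('v \<Rightarrow> 'v \<Rightarrow> real)" where
  "shift M c = (\<lambda>u w. M u w - (if u = w then c else 0))"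

definition cinner :: "'v set \<Rightarrow> ('v \<Rightarrow> complex) \<Rightarrow> ('v \<Rightarrow> complex) \<Rightarrow> complex" where
  "cinner V x y = (\<Sum>v\<in>V. cnj (x v) * y v)"

definition e1 :: real where "e1 = -1 - 3 * sqrt 2"

definition V0 :: "(nat \<times> nat \<times> nat) set" where
  "V0 = {(z,t,j). z < 2 \<and> t \<in> {1..8} \<and> j < 8}"

definition simple_graph_adj :: "'v set \<Rightarrow> ('v \<Rightarrow> 'v \<Rightarrow> real) \<Rightarrow> bool" where
  "simple_graph_adj V A \<longleftrightarrow> (\<forall>u\<in>V. \<forall>w\<in>V. A u w \<in> {0,1} \<and> A u w = A w u) \<and> (\<forall>u\<in>V. A u u = 0)"

definition Hm :: "nat \<Rightarrow> nat \<Rightarrow> complex" where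
  "Hm z' z = (if z' = 1 \<and> z = 1 then -1 else 1) / complex_of_real (sqrt 2)"

definition Tm :: "nat \<Rightarrow> complex" where
  "Tm z = (if z = 0 then 1 else cis (pi / 4))"

text \<open>coef z t z' = z'-component of the qubit vector attached to position t in psi_{z,0}:
  |z> for t odd, H|z> for t in {2,8}, HT|z> for t in {4,6}.\<close>
definition coef :: "nat \<Rightarrow> nat \<Rightarrow> nat \<Rightarrow> complex" where
  "coef z t z' = (if t \<in> {1,3,5,7} then (if z' = z then 1 else 0)
                  else if t \<in> {2,8} then Hm z' z
                  else if t \<in> {4,6} then Hm z' z * Tm z
                  else 0)"

definition omega :: "nat \<Rightarrow> complex" where
  "omega j = cis (- pi * real j / 4) / complex_of_real (sqrt 8)"

definition psi0 :: "nat \<Rightarrow> nat \<times> nat \<times> nat \<Rightarrow> complex" where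
  "psi0 z = (\<lambda>(z',t,j). if (z',t,j) \<in> V0 then coef z t z' * omega j / complex_of_real (sqrt 8) else 0)"

definition psi1 :: "nat \<Rightarrow> nat \<times> nat \<times> nat \<Rightarrow> complex" where
  "psi1 z = (\<lambda>v. cnj (psi0 z v))"

definition g0_spec :: "(nat \<times> nat \<times> nat \<Rightarrow> nat \<times> nat \<times> nat \<Rightarrow> real) \<Rightarrow> bool" where
  "g0_spec A0 \<longleftrightarrow> simple_graph_adj V0 A0 \<and> smallest_eigenvalue V0 A0 e1 \<and>
     (let B = [psi0 0, psi0 1, psi1 0, psi1 1] in
       (\<forall>i<4. \<forall>k<4. cinner V0 (B ! i) (B ! k) = (if i = k then 1 else 0)) \<and>
       (\<forall>x. in_eigenspace V0 A0 (complex_of_real e1) x \<longleftrightarrow>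
            (\<exists>c :: nat \<Rightarrow> complex. x = (\<lambda>v. \<Sum>i<4. c i * (B ! i) v))))"

datatype gate_label = GId | GH | GHT

definition Tset :: "gate_label \<Rightarrow> nat set" where
  "Tset U = (case U of GH \<Rightarrow> {2,8} | GHT \<Rightarrow> {4,6} | GId \<Rightarrow> {5,7})"

definition diagram_nodes :: "nat \<Rightarrow> (nat \<Rightarrow> gate_label) \<Rightarrow> (nat \<times> nat \<times> nat) set" where
  "diagram_nodes R U = {(q,z,t). q \<in> {1..R} \<and> z < 2 \<and> t \<in> {1,3} \<union> Tset (U q)}"

definition gate_diagram :: "nat \<Rightarrow> (nat \<Rightarrow> gate_label) \<Rightarrow> (nat \<times> nat \<times> nat) set
     \<Rightarrow> (nat \<times> nat \<times> nat) set set \<Rightarrow> bool" where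
  "gate_diagram R U S E \<longleftrightarrow>
     S \<subseteq> diagram_nodes R U \<and>
     (\<forall>p\<in>E. \<exists>a b. a \<noteq> b \<and> p = {a, b} \<and> a \<in> diagram_nodes R U \<and> b \<in> diagram_nodes R U) \<and>
     (\<forall>p\<in>E. p \<inter> S = {}) \<and>
     (\<forall>p\<in>E. \<forall>p'\<in>E. p \<noteq> p' \<longrightarrow> p \<inter> p' = {})"

definition VG :: "nat \<Rightarrow> (nat \<times> nat \<times> nat \<times> nat) set" where
  "VG R = {(q,z,t,j). q \<in> {1..R} \<and> z < 2 \<and> t \<in> {1..8} \<and> j < 8}"

text \<open>A(G) = 1_q (x) A(g0) + h_S + h_E.\<close>
definition AG :: "(nat \<times> nat \<times> nat \<Rightarrow> nat \<times> nat \<times> nat \<Rightarrow> real) \<Rightarrow> (nat \<times> nat \<times> nat) set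
     \<Rightarrow> (nat \<times> nat \<times> nat) set set \<Rightarrow> (nat \<times> nat \<times> nat \<times> nat \<Rightarrow> nat \<times> nat \<times> nat \<times> nat \<Rightarrow> real)" where
  "AG A0 S E = (\<lambda>(q,z,t,j) (q',z',t',j').
      (if q = q' then A0 (z,t,j) (z',t',j') else 0)
    + (if (q,z,t,j) = (q',z',t',j') \<and> (q,z,t) \<in> S then 1 else 0)
    + (if j = j' \<and> (\<exists>p\<in>E. (q,z,t) \<in> p \<and> (q',z',t') \<in> p) then 1 else 0))"

definition e1_gate_graph :: "(nat \<times> nat \<times> nat \<Rightarrow> nat \<times> nat \<times> nat \<Rightarrow> real) \<Rightarrow> nat
     \<Rightarrow> (nat \<times> nat \<times> nat) set \<Rightarrow> (nat \<times> nat \<times> nat) set set \<Rightarrow> bool" where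
  "e1_gate_graph A0 R S E \<longleftrightarrow> smallest_eigenvalue (VG R) (AG A0 S E) e1"

definition Nset :: "nat \<Rightarrow> (nat \<times> nat \<times> nat) set \<Rightarrow> (nat \<times> nat \<times> nat) set set
     \<Rightarrow> (nat \<times> nat \<times> nat \<times> nat) set" where
  "Nset R S E = {(q,z,t,j) \<in> VG R. (q,z,t) \<notin> S \<and> (\<forall>p\<in>E. (q,z,t) \<notin> p)}"

definition VSL :: "nat \<Rightarrow> ((nat \<times> nat \<times> nat \<times> nat) \<times> nat) set" where
  "VSL R = VG R \<times> {0, 1}"

text \<open>A(G^SL) = A(G) (x) 1_2 + 2 Pi_N (x) Pi_+, with Pi_+ having all entries 1/2.\<close>
definition ASL :: "(nat \<times> nat \<times> nat \<Rightarrow> nat \<times> nat \<times> nat \<Rightarrow> real) \<Rightarrow> nat \<Rightarrow> (nat \<times> nat \<times> nat) set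
     \<Rightarrow> (nat \<times> nat \<times> nat) set set
     \<Rightarrow> ((nat \<times> nat \<times> nat \<times> nat) \<times> nat \<Rightarrow> (nat \<times> nat \<times> nat \<times> nat) \<times> nat \<Rightarrow> real)" where
  "ASL A0 R S E = (\<lambda>(v,a) (w,b).
      (if a = b then AG A0 S E v w else 0)
    + 2 * (if v = w \<and> v \<in> Nset R S E then 1 else 0) * (1/2))"

end

theory Submission
  imports Defs "HOL-Analysis.Analysis"
begin

text \<open>Write \<open>H = A(G) - e\<^sub>1\<close>, which is positive semidefinite. Since \<open>2\<Pi>\<^sub>+\<close> is the
  all-ones \<open>2 \<times> 2\<close> matrix, \<open>A(G\<^sup>S\<^sup>L) - e\<^sub>1\<close> splits along \<open>|-\<rangle>\<close> and \<open>|+\<rangle>\<close> into \<open>H\<close> and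
  \<open>H + 2\<Pi>\<^sub>N\<close>. Eigenvalues of the first part are at least \<open>\<gamma>(H)\<close>. For an eigenvector \<open>y\<close>
  of \<open>H + 2\<Pi>\<^sub>N\<close> with eigenvalue \<open>\<mu>\<close>, split \<open>y = r + k\<close> with \<open>k\<close> in the kernel of \<open>H\<close> and
  \<open>r\<close> orthogonal to it; then \<open>\<mu> |y|\<^sup>2 \<ge> \<gamma>(H) |r|\<^sup>2 + 2 |\<Pi>\<^sub>N y|\<^sup>2\<close>. On every diagram
  element a kernel vector of \<open>H\<close> is an \<open>e\<^sub>1\<close>-eigenvector of \<open>A(g\<^sub>0)\<close>, and these put one
  eighth of their mass on a position that is not a node, i.e. inside \<open>N\<close>. Hence \<open>r\<close> or
  \<open>\<Pi>\<^sub>N y\<close> carries a fixed fraction of \<open>|y|\<^sup>2\<close>, and \<open>\<mu> \<ge> min (\<gamma>(H)/33) (2/33)\<close>. A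
  row-sum bound gives \<open>\<gamma>(H) \<le> 138\<close>, so \<open>C = 2/(33 \<cdot> 138)\<close> works.\<close>

section \<open>Vectors and matrices on a finite index set\<close>

definition supported :: "'v set \<Rightarrow> ('v \<Rightarrow> complex) \<Rightarrow> bool" where
  "supported V x \<longleftrightarrow> (\<forall>v. v \<notin> V \<longrightarrow> x v = 0)"

definition mat_vec :: "'v set \<Rightarrow> ('v \<Rightarrow> 'v \<Rightarrow> real) \<Rightarrow> ('v \<Rightarrow> complex) \<Rightarrow> 'v \<Rightarrow> complex" where
  "mat_vec V M x = (\<lambda>u. if u \<in> V then (\<Sum>w\<in>V. complex_of_real (M u w) * x w) else 0)"

definition sqnorm :: "'v set \<Rightarrow> ('v \<Rightarrow> complex) \<Rightarrow> real" where
  "sqnorm V x = (\<Sum>v\<in>V. (cmod (x v))\<^sup>2)"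

definition qform :: "'v set \<Rightarrow> ('v \<Rightarrow> 'v \<Rightarrow> real) \<Rightarrow> ('v \<Rightarrow> complex) \<Rightarrow> real" where
  "qform V M x = Re (cinner V x (mat_vec V M x))"

definition symmetric_mat :: "'v set \<Rightarrow> ('v \<Rightarrow> 'v \<Rightarrow> real) \<Rightarrow> bool" where
  "symmetric_mat V M \<longleftrightarrow> (\<forall>u\<in>V. \<forall>w\<in>V. M u w = M w u)"

definition psd_mat :: "'v set \<Rightarrow> ('v \<Rightarrow> 'v \<Rightarrow> real) \<Rightarrow> bool" where
  "psd_mat V M \<longleftrightarrow> (\<forall>x. supported V x \<longrightarrow> qform V M x \<ge> 0)"

definition mat_kernel :: "'v set \<Rightarrow> ('v \<Rightarrow> 'v \<Rightarrow> real) \<Rightarrow> ('v \<Rightarrow> complex) set" where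
  "mat_kernel V M = {x. supported V x \<and> mat_vec V M x = (\<lambda>v. 0)}"

definition nonzero_eigenvalues :: "'v set \<Rightarrow> ('v \<Rightarrow> 'v \<Rightarrow> real) \<Rightarrow> real set" where
  "nonzero_eigenvalues V M = {x. x \<noteq> 0 \<and> is_eigenvalue V M (complex_of_real x)}"

lemma gamma_eq_Min: "gamma V M = Min (nonzero_eigenvalues V M)"
  unfolding gamma_def nonzero_eigenvalues_def ..

lemma supported_mat_vec: "supported V (mat_vec V M x)"
  by (simp add: supported_def mat_vec_def)

lemma mat_vec_apply: "u \<in> V \<Longrightarrow> mat_vec V M x u = (\<Sum>w\<in>V. complex_of_real (M u w) * x w)"
  unfolding mat_vec_def by simp

lemma cinner_self: "cinner V x x = complex_of_real (sqnorm V x)"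
  unfolding cinner_def sqnorm_def of_real_sum complex_norm_square
  by (simp add: mult.commute)

lemma sqnorm_nonneg: "sqnorm V x \<ge> 0"
  unfolding sqnorm_def by (simp add: sum_nonneg)

lemma sqnorm_eq_Re_cinner: "sqnorm V x = Re (cinner V x x)"
  by (simp add: cinner_self)

lemma sqnorm_eq_0_iff: "finite V \<Longrightarrow> sqnorm V x = 0 \<longleftrightarrow> (\<forall>v\<in>V. x v = 0)"
  unfolding sqnorm_def by (simp add: sum_nonneg_eq_0_iff)

lemma sqnorm_pos_iff: "finite V \<Longrightarrow> sqnorm V x > 0 \<longleftrightarrow> (\<exists>v\<in>V. x v \<noteq> 0)"
  using sqnorm_eq_0_iff[of V x] sqnorm_nonneg[of V x] by force

lemma supported_eqI:
  "supported V x \<Longrightarrow> supported V y \<Longrightarrow> (\<forall>v\<in>V. x v = y v) \<Longrightarrow> x = y"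
  unfolding supported_def by (metis ext)

lemma cinner_add_right: "cinner V x (\<lambda>v. y v + z v) = cinner V x y + cinner V x z"
  unfolding cinner_def by (simp add: distrib_left sum.distrib)

lemma cinner_add_left: "cinner V (\<lambda>v. y v + z v) x = cinner V y x + cinner V z x"
  unfolding cinner_def by (simp add: distrib_right sum.distrib)

lemma cinner_scale_right: "cinner V x (\<lambda>v. c * y v) = c * cinner V x y"
  unfolding cinner_def by (simp add: sum_distrib_left mult.left_commute)

lemma cinner_scale_left: "cinner V (\<lambda>v. c * y v) x = cnj c * cinner V y x"
  unfolding cinner_def by (simp add: sum_distrib_left mult.assoc)

lemma cinner_commute: "cinner V y x = cnj (cinner V x y)"
  unfolding cinner_def by (simp add: mult.commute)

lemma cinner_diff_right: "cinner V x (\<lambda>v. y v - z v) = cinner V x y - cinner V x z"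
  unfolding cinner_def by (simp add: right_diff_distrib sum_subtractf)

lemma cinner_diff_left: "cinner V (\<lambda>v. y v - z v) x = cinner V y x - cinner V z x"
  unfolding cinner_def by (simp add: left_diff_distrib sum_subtractf)

lemma cinner_zero_right: "(\<forall>v\<in>V. y v = 0) \<Longrightarrow> cinner V x y = 0"
  unfolding cinner_def by simp

lemma cinner_zero_left: "(\<forall>v\<in>V. y v = 0) \<Longrightarrow> cinner V y x = 0"
  unfolding cinner_def by simp

lemma cinner_sum_left:
  "cinner V (\<lambda>v. \<Sum>i\<in>F. c i * f i v) g = (\<Sum>i\<in>F. cnj (c i) * cinner V (f i) g)"
  unfolding cinner_def cnj_sum sum_distrib_right sum_distrib_left
  by (subst sum.swap) (simp add: mult.assoc)

lemma cinner_sum_right: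
  "cinner V g (\<lambda>v. \<Sum>i\<in>F. c i * f i v) = (\<Sum>i\<in>F. c i * cinner V g (f i))"
  unfolding cinner_def sum_distrib_right sum_distrib_left
  by (subst sum.swap) (simp add: mult.left_commute)

lemma cinner_orthonormal:
  assumes fin: "finite F"
    and on: "\<forall>i\<in>F. \<forall>j\<in>F. cinner V (f i) (f j) = (if i = j then 1 else 0)"
  shows "cinner V (\<lambda>v. \<Sum>i\<in>F. c i * f i v) (\<lambda>v. \<Sum>j\<in>F. d j * f j v) = (\<Sum>i\<in>F. cnj (c i) * d i)"
proof -
  have "cinner V (\<lambda>v. \<Sum>i\<in>F. c i * f i v) (\<lambda>v. \<Sum>j\<in>F. d j * f j v)
      = (\<Sum>i\<in>F. cnj (c i) * (\<Sum>j\<in>F. d j * cinner V (f i) (f j)))"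
    unfolding cinner_sum_left cinner_sum_right ..
  also have "\<dots> = (\<Sum>i\<in>F. cnj (c i) * d i)"
  proof (intro sum.cong refl)
    fix i assume i: "i \<in> F"
    have "(\<Sum>j\<in>F. d j * cinner V (f i) (f j)) = (\<Sum>j\<in>F. if j = i then d j else 0)"
      using on i by (intro sum.cong refl) auto
    also have "\<dots> = d i" using fin i by simp
    finally show "cnj (c i) * (\<Sum>j\<in>F. d j * cinner V (f i) (f j)) = cnj (c i) * d i" by simp
  qed
  finally show ?thesis .
qed

lemma Re_cnj_mult: "Re (cnj z * z) = (cmod z)\<^sup>2"
  by (metis Re_complex_of_real complex_norm_square mult.commute)

lemma mat_vec_add: "mat_vec V M (\<lambda>v. x v + y v) = (\<lambda>v. mat_vec V M x v + mat_vec V M y v)"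
  unfolding mat_vec_def by (auto simp: distrib_left sum.distrib)

lemma mat_vec_scale: "mat_vec V M (\<lambda>v. c * x v) = (\<lambda>v. c * mat_vec V M x v)"
  unfolding mat_vec_def by (auto simp: sum_distrib_left mult.left_commute)

lemma mat_vec_add_mat: "mat_vec V (\<lambda>u w. M1 u w + M2 u w) x = (\<lambda>u. mat_vec V M1 x u + mat_vec V M2 x u)"
  unfolding mat_vec_def by (auto simp: distrib_right sum.distrib)

lemma cinner_mat_vec_symmetric:
  assumes "symmetric_mat V M"
  shows "cinner V x (mat_vec V M y) = cinner V (mat_vec V M x) y"
proof -
  have "cinner V x (mat_vec V M y) = (\<Sum>u\<in>V. \<Sum>w\<in>V. cnj (x u) * complex_of_real (M u w) * y w)"
    unfolding cinner_def mat_vec_def by (simp add: sum_distrib_left mult.assoc)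
  also have "\<dots> = (\<Sum>w\<in>V. \<Sum>u\<in>V. cnj (x u) * complex_of_real (M u w) * y w)"
    by (rule sum.swap)
  also have "\<dots> = cinner V (mat_vec V M x) y"
    unfolding cinner_def mat_vec_def
  proof (intro sum.cong refl)
    fix w assume w: "w \<in> V"
    have "(\<Sum>u\<in>V. cnj (x u) * complex_of_real (M u w) * y w)
        = cnj (\<Sum>u\<in>V. complex_of_real (M w u) * x u) * y w"
      unfolding sum_distrib_right cnj_sum
      using assms w unfolding symmetric_mat_def by (intro sum.cong refl) (simp add: mult.commute)
    then show "(\<Sum>u\<in>V. cnj (x u) * complex_of_real (M u w) * y w)
        = cnj (if w \<in> V then \<Sum>u\<in>V. complex_of_real (M w u) * x u else 0) * y w"
      using w by simp
  qed
  finally show ?thesis .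
qed

lemma qform_add_scaled:
  assumes "symmetric_mat V M"
  shows "qform V M (\<lambda>v. y v + complex_of_real t * z v)
       = qform V M y + 2 * t * Re (cinner V z (mat_vec V M y)) + t\<^sup>2 * qform V M z"
proof -
  have h: "cinner V y (mat_vec V M z) = cnj (cinner V z (mat_vec V M y))"
    using cinner_mat_vec_symmetric[OF assms, of y z] cinner_commute[of V "mat_vec V M y" z] by simp
  show ?thesis
    unfolding qform_def mat_vec_add mat_vec_scale cinner_add_left cinner_add_right cinner_scale_left
      cinner_scale_right h
    by (simp add: power2_eq_square algebra_simps)
qed

lemma sqnorm_add_scaled:
  "sqnorm V (\<lambda>v. y v + complex_of_real t * z v)
       = sqnorm V y + 2 * t * Re (cinner V z y) + t\<^sup>2 * sqnorm V z"
proof -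
  have h: "cinner V y z = cnj (cinner V z y)"
    using cinner_commute[of V z y] by simp
  show ?thesis
    unfolding sqnorm_eq_Re_cinner cinner_add_left cinner_add_right cinner_scale_left
      cinner_scale_right h
    by (simp add: power2_eq_square algebra_simps)
qed

lemma qform_scale: "qform V M (\<lambda>v. c * x v) = (cmod c)\<^sup>2 * qform V M x"
proof -
  have "cnj c * c = complex_of_real ((cmod c)\<^sup>2)"
    by (metis complex_norm_square mult.commute)
  then have "Re (cnj c * (c * cinner V x (mat_vec V M x))) = (cmod c)\<^sup>2 * Re (cinner V x (mat_vec V M x))"
    by (simp only: mult.assoc[symmetric]) simp
  then show ?thesis unfolding qform_def mat_vec_scale cinner_scale_left cinner_scale_right by simp
qed

lemma sqnorm_scale: "sqnorm V (\<lambda>v. c * x v) = (cmod c)\<^sup>2 * sqnorm V x"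
  unfolding sqnorm_def by (simp add: norm_mult power_mult_distrib sum_distrib_left)

lemma sqnorm_normalize:
  assumes "sqnorm V x \<noteq> 0"
  shows "sqnorm V (\<lambda>v. complex_of_real (1 / sqrt (sqnorm V x)) * x v) = 1"
  using assms sqnorm_nonneg[of V x] unfolding sqnorm_scale
  by (simp add: norm_divide power_divide real_sqrt_pow2 abs_of_nonneg)

lemma qform_add_mat: "qform V (\<lambda>u w. M1 u w + M2 u w) x = qform V M1 x + qform V M2 x"
  unfolding qform_def mat_vec_add_mat cinner_add_right by simp

lemma qform_scale_mat: "qform V (\<lambda>u w. c * M u w) x = c * qform V M x"
proof -
  have "mat_vec V (\<lambda>u w. c * M u w) x = (\<lambda>u. complex_of_real c * mat_vec V M x u)"
    unfolding mat_vec_def by (auto simp: sum_distrib_left mult.assoc)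
  then show ?thesis unfolding qform_def by (simp add: cinner_scale_right)
qed

lemma qform_eq_0_if_zero: "(\<forall>v\<in>V. x v = 0) \<Longrightarrow> qform V M x = 0"
  unfolding qform_def by (simp add: cinner_zero_left)

lemma qform_eq_sum: "qform V M x = Re (\<Sum>u\<in>V. cnj (x u) * (\<Sum>w\<in>V. complex_of_real (M u w) * x w))"
  unfolding qform_def cinner_def mat_vec_def by simp

lemma qform_gram_nonneg:
  assumes "finite I" and "\<forall>u\<in>V. \<forall>w\<in>V. M u w = (\<Sum>i\<in>I. g i u * g i w)"
  shows "qform V M x \<ge> 0"
proof -
  define s where "s i = (\<Sum>w\<in>V. complex_of_real (g i w) * x w)" for i
  have "cinner V x (mat_vec V M x)
      = (\<Sum>u\<in>V. \<Sum>w\<in>V. \<Sum>i\<in>I. cnj (x u) * complex_of_real (g i u) * (complex_of_real (g i w) * x w))"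
    unfolding cinner_def mat_vec_def using assms(2)
    by (auto simp: sum_distrib_left sum_distrib_right mult.assoc intro!: sum.cong)
  also have "\<dots> = (\<Sum>i\<in>I. \<Sum>u\<in>V. \<Sum>w\<in>V. cnj (x u) * complex_of_real (g i u) * (complex_of_real (g i w) * x w))"
    by (subst sum.swap, subst (2) sum.swap) (rule refl)
  also have "\<dots> = (\<Sum>i\<in>I. cnj (s i) * s i)"
    unfolding s_def cnj_sum sum_product by (simp add: mult_ac)
  finally have "qform V M x = (\<Sum>i\<in>I. Re (cnj (s i) * s i))" unfolding qform_def by (simp add: Re_sum)
  also have "\<dots> \<ge> 0" by (intro sum_nonneg) (simp add: Re_cnj_mult)
  finally show ?thesis .
qed

lemma cmod_add_sq_le: "(cmod (a + b))\<^sup>2 \<le> 2 * (cmod a)\<^sup>2 + 2 * (cmod b)\<^sup>2"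
proof -
  have "(cmod (a + b))\<^sup>2 + (cmod (a - b))\<^sup>2 = 2 * (cmod a)\<^sup>2 + 2 * (cmod b)\<^sup>2"
    unfolding cmod_power2 by (simp add: power2_eq_square algebra_simps)
  then show ?thesis by (smt (verit) zero_le_power2)
qed

lemma sqnorm_diff_le: "sqnorm V (\<lambda>v. x v - y v) \<le> 2 * sqnorm V x + 2 * sqnorm V y"
  unfolding sqnorm_def sum_distrib_left sum.distrib[symmetric]
  by (intro sum_mono) (use cmod_add_sq_le[of "x v" "- y v" for v] in auto)

lemma in_eigenspace_iff_mat_vec:
  "in_eigenspace V M \<mu> x \<longleftrightarrow> supported V x \<and> mat_vec V M x = (\<lambda>u. \<mu> * x u)"
  unfolding in_eigenspace_def supported_def mat_vec_def by (auto simp: fun_eq_iff)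

lemma mat_kernel_iff_eigenspace_0: "x \<in> mat_kernel V M \<longleftrightarrow> in_eigenspace V M 0 x"
  unfolding mat_kernel_def in_eigenspace_iff_mat_vec by simp

lemma in_eigenspace_scale: "in_eigenspace V M \<mu> x \<Longrightarrow> in_eigenspace V M \<mu> (\<lambda>v. c * x v)"
  unfolding in_eigenspace_iff_mat_vec mat_vec_scale supported_def by (simp add: mult.left_commute)

lemma qform_eigenvector:
  "in_eigenspace V M (complex_of_real \<mu>) x \<Longrightarrow> qform V M x = \<mu> * sqnorm V x"
  unfolding in_eigenspace_iff_mat_vec qform_def by (simp add: cinner_scale_right cinner_self)

lemma cinner_eigenvectors_eq_0:
  assumes sym: "symmetric_mat V M" and "a \<noteq> b"
    and x: "in_eigenspace V M (complex_of_real a) x" and y: "in_eigenspace V M (complex_of_real b) y"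
  shows "cinner V x y = 0"
proof -
  have "cinner V x (mat_vec V M y) = cinner V (mat_vec V M x) y"
    by (rule cinner_mat_vec_symmetric[OF sym])
  then have "complex_of_real b * cinner V x y = complex_of_real a * cinner V x y"
    using x y unfolding in_eigenspace_iff_mat_vec by (simp add: cinner_scale_left cinner_scale_right)
  then show ?thesis using \<open>a \<noteq> b\<close> by simp
qed

section \<open>Minimisation over closed subspaces\<close>

definition subspace_on :: "'v set \<Rightarrow> ('v \<Rightarrow> complex) set \<Rightarrow> bool" where
  "subspace_on V W \<longleftrightarrow> (\<forall>x\<in>W. supported V x) \<and> (\<lambda>v. 0) \<in> W \<and>
     (\<forall>x\<in>W. \<forall>y\<in>W. (\<lambda>v. x v + y v) \<in> W) \<and> (\<forall>x\<in>W. \<forall>c. (\<lambda>v. c * x v) \<in> W)"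

lemma subspace_onD:
  assumes "subspace_on V W"
  shows "\<And>x. x \<in> W \<Longrightarrow> supported V x" "(\<lambda>v. 0) \<in> W"
    "\<And>x y. x \<in> W \<Longrightarrow> y \<in> W \<Longrightarrow> (\<lambda>v. x v + y v) \<in> W"
    "\<And>x c. x \<in> W \<Longrightarrow> (\<lambda>v. c * x v) \<in> W"
  using assms unfolding subspace_on_def by blast+

lemma linear_coeff_eq_0_if_nonneg:
  fixes a b :: real
  assumes "\<forall>t. 2 * t * a + t\<^sup>2 * b \<ge> 0"
  shows "a = 0"
proof (rule ccontr)
  assume "a \<noteq> 0"
  define t where "t = - a / (2 * (\<bar>b\<bar> + 1))"
  have d: "\<bar>b\<bar> + 1 > 0" by simp
  have "2 * t * a = - a\<^sup>2 / (\<bar>b\<bar> + 1)"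
    unfolding t_def using d by (simp add: power2_eq_square field_simps)
  moreover have "t\<^sup>2 * b \<le> a\<^sup>2 / (4 * (\<bar>b\<bar> + 1))"
  proof -
    have "t\<^sup>2 * b \<le> t\<^sup>2 * (\<bar>b\<bar> + 1)" by (intro mult_left_mono) auto
    also have "\<dots> = a\<^sup>2 / (2 * (\<bar>b\<bar> + 1))\<^sup>2 * (\<bar>b\<bar> + 1)"
      unfolding t_def by (simp add: power_divide)
    also have "\<dots> = a\<^sup>2 / (4 * (\<bar>b\<bar> + 1))"
      using d by (simp add: power2_eq_square divide_simps) (simp add: algebra_simps)
    finally show ?thesis .
  qed
  moreover have "a\<^sup>2 / (4 * (\<bar>b\<bar> + 1)) < a\<^sup>2 / (\<bar>b\<bar> + 1)"
    using d \<open>a \<noteq> 0\<close> by (intro divide_strict_left_mono) auto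
  ultimately have "2 * t * a + t\<^sup>2 * b < 0" by linarith
  then show False using assms by (meson not_le)
qed

text \<open>Testing with both \<open>z\<close> and \<open>\<i> z\<close> kills the real and the imaginary part of
  \<open>\<langle>z, d\<rangle>\<close>.\<close>
lemma cinner_eq_0_if_variation_nonneg:
  assumes W: "\<And>z. z \<in> W \<Longrightarrow> (\<lambda>v. \<i> * z v) \<in> W"
    and var: "\<And>z t. z \<in> W \<Longrightarrow> 2 * t * Re (cinner V z d) + t\<^sup>2 * Q z \<ge> 0"
    and z: "z \<in> W"
  shows "cinner V z d = 0"
proof (rule complex_eqI)
  have "Re (cinner V z d) = 0"
    by (rule linear_coeff_eq_0_if_nonneg) (use var[OF z] in blast)
  then show "Re (cinner V z d) = Re 0" by simp
  have "Re (cinner V (\<lambda>v. \<i> * z v) d) = 0"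
    by (rule linear_coeff_eq_0_if_nonneg) (use var[OF W[OF z]] in blast)
  then show "Im (cinner V z d) = Im 0"
    unfolding cinner_scale_left by simp
qed

lemma continuous_on_coordinate: "continuous_on S (\<lambda>x::'v \<Rightarrow> 'b::topological_space. x v)"
  by (rule continuous_on_subset[OF continuous_on_product_coordinates]) auto

lemma continuous_on_sqnorm: "continuous_on S (\<lambda>x. sqnorm V x)"
  unfolding sqnorm_def by (intro continuous_intros continuous_on_coordinate)

lemma continuous_on_qform: "continuous_on S (\<lambda>x. qform V M x)"
  unfolding qform_eq_sum by (intro continuous_intros continuous_on_coordinate)

lemma compact_supported_ball:
  "compact {x::'v \<Rightarrow> complex. \<forall>v. x v \<in> (if v \<in> V then cball 0 r else {0})}"
proof -
  have "compactin (product_topology (\<lambda>i. euclidean) UNIV)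
          (PiE UNIV (\<lambda>v. if v \<in> V then cball (0::complex) r else {0}))"
    by (subst compactin_PiE) auto
  moreover have "PiE UNIV (\<lambda>v. if v \<in> V then cball (0::complex) r else {0})
      = {x::'v \<Rightarrow> complex. \<forall>v. x v \<in> (if v \<in> V then cball 0 r else {0})}"
    by (auto simp: PiE_UNIV_domain Pi_def)
  ultimately show ?thesis
    by (simp add: euclidean_product_topology)
qed

lemma closed_supported: "closed {x::'v \<Rightarrow> complex. supported V x}"
proof -
  have "{x::'v \<Rightarrow> complex. supported V x} = (\<Inter>v\<in>-V. {x. x v = 0})"
    by (auto simp: supported_def)
  moreover have "closed {x::'v \<Rightarrow> complex. x v = 0}" for v
    by (intro closed_Collect_eq continuous_on_coordinate continuous_intros)
  ultimately show ?thesis by auto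
qed

lemma cmod_le_sqrt_sqnorm: "finite V \<Longrightarrow> v \<in> V \<Longrightarrow> cmod (x v) \<le> sqrt (sqnorm V x)"
  unfolding sqnorm_def by (intro real_le_rsqrt member_le_sum) auto

lemma continuous_attains_inf_supported:
  fixes f :: "('v \<Rightarrow> complex) \<Rightarrow> real"
  assumes fin: "finite V" and cl: "closed T" and T: "\<And>x. x \<in> T \<Longrightarrow> supported V x"
    and bd: "\<And>x. x \<in> T \<Longrightarrow> sqnorm V x \<le> r" and ne: "T \<noteq> {}" and f: "continuous_on T f"
  obtains y where "y \<in> T" "\<And>x. x \<in> T \<Longrightarrow> f y \<le> f x"
proof -
  define B where "B = {x::'v \<Rightarrow> complex. \<forall>v. x v \<in> (if v \<in> V then cball 0 (sqrt r) else {0})}"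
  have "T \<subseteq> B"
  proof
    fix x assume x: "x \<in> T"
    have "cmod (x v) \<le> sqrt r" if "v \<in> V" for v
      using cmod_le_sqrt_sqnorm[OF fin that, of x] real_sqrt_le_mono[OF bd[OF x]] by linarith
    then show "x \<in> B" using T[OF x] unfolding B_def supported_def by simp
  qed
  then have "compact T"
    using compact_Int_closed[OF compact_supported_ball cl, of V "sqrt r"] unfolding B_def
    by (simp add: Int_absorb1)
  then show thesis using continuous_attains_inf[OF _ ne f] that by blast
qed

lemma rayleigh_minimizer_eigenvector:
  assumes fin: "finite V" and sym: "symmetric_mat V M"
    and W: "subspace_on V W" and inv: "\<And>x. x \<in> W \<Longrightarrow> mat_vec V M x \<in> W"
    and y: "y \<in> W" "sqnorm V y = 1"
    and lb: "\<And>x. x \<in> W \<Longrightarrow> qform V M y * sqnorm V x \<le> qform V M x"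
  shows "mat_vec V M y = (\<lambda>v. complex_of_real (qform V M y) * y v)"
proof -
  note W' = subspace_onD[OF W]
  define m where "m = qform V M y"
  define d where "d = (\<lambda>v. mat_vec V M y v - complex_of_real m * y v)"
  have "cinner V z d = 0" if "z \<in> W" for z
  proof (rule cinner_eq_0_if_variation_nonneg[where Q = "\<lambda>z. qform V M z - m * sqnorm V z"])
    fix z t assume z: "z \<in> W"
    have "(\<lambda>v. y v + complex_of_real t * z v) \<in> W" using W'(3)[OF y(1) W'(4)[OF z]] .
    from lb[OF this] show "2 * t * Re (cinner V z d) + t\<^sup>2 * (qform V M z - m * sqnorm V z) \<ge> 0"
      unfolding qform_add_scaled[OF sym] sqnorm_add_scaled d_def cinner_diff_right cinner_scale_right
      using y(2) m_def by (simp add: algebra_simps)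
  qed (use W'(4) that in auto)
  moreover have "d \<in> W"
    using W'(3)[OF inv[OF y(1)] W'(4)[OF y(1), of "- complex_of_real m"]] unfolding d_def by simp
  ultimately have "sqnorm V d = 0" using cinner_self[of V d] by simp
  then show ?thesis
    using sqnorm_eq_0_iff[OF fin] W'(1)[OF y(1)] supported_mat_vec[of V M y] unfolding m_def[symmetric]
    by (intro supported_eqI) (auto simp: d_def supported_def)
qed

lemma exists_rayleigh_minimizer:
  assumes fin: "finite V" and sym: "symmetric_mat V M"
    and W: "subspace_on V W" "closed W" and inv: "\<And>x. x \<in> W \<Longrightarrow> mat_vec V M x \<in> W"
    and x0: "x0 \<in> W" "sqnorm V x0 \<noteq> 0"
  shows "\<exists>y\<in>W. sqnorm V y = 1 \<and> mat_vec V M y = (\<lambda>v. complex_of_real (qform V M y) * y v)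
            \<and> (\<forall>x\<in>W. qform V M x \<ge> qform V M y * sqnorm V x)"
proof -
  note W' = subspace_onD[OF W(1)]
  define T where "T = W \<inter> {x. sqnorm V x = 1}"
  define nz where "nz x = (\<lambda>v. complex_of_real (1 / sqrt (sqnorm V x)) * x v)" for x
  have nzT: "nz x \<in> T" if "x \<in> W" "sqnorm V x \<noteq> 0" for x
    unfolding T_def nz_def using sqnorm_normalize[OF that(2)] W'(4)[OF that(1)] by blast
  have "closed T"
    unfolding T_def by (intro closed_Int W(2) closed_Collect_eq continuous_on_sqnorm continuous_intros)
  moreover have "\<And>x. x \<in> T \<Longrightarrow> supported V x" "\<And>x. x \<in> T \<Longrightarrow> sqnorm V x \<le> 1" "T \<noteq> {}"
    using W'(1) nzT[OF x0] unfolding T_def by auto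
  ultimately obtain y where yT: "y \<in> T" and ymin: "\<And>x. x \<in> T \<Longrightarrow> qform V M y \<le> qform V M x"
    using continuous_attains_inf_supported[OF fin _ _ _ _ continuous_on_qform] by blast
  have yW: "y \<in> W" and y1: "sqnorm V y = 1" using yT unfolding T_def by auto
  have lb: "qform V M y * sqnorm V x \<le> qform V M x" if "x \<in> W" for x
  proof (cases "sqnorm V x = 0")
    case True
    then have "\<forall>v\<in>V. x v = 0" using sqnorm_eq_0_iff[OF fin] by blast
    then show ?thesis using True by (simp add: qform_eq_0_if_zero)
  next
    case False
    have p: "sqnorm V x > 0" using False sqnorm_nonneg[of V x] by linarith
    have "qform V M y \<le> qform V M (nz x)" using ymin nzT[OF that False] by blast
    also have "qform V M (nz x) = qform V M x / sqnorm V x"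
      unfolding nz_def qform_scale using p
      by (simp add: norm_divide power_divide real_sqrt_pow2 abs_of_pos)
    finally show ?thesis using p by (simp add: field_simps)
  qed
  then show ?thesis
    using yW y1 rayleigh_minimizer_eigenvector[OF fin sym W(1) inv yW y1] by blast
qed

lemma exists_orthogonal_projection:
  assumes fin: "finite V" and W: "subspace_on V W" "closed W" and y: "supported V y"
  shows "\<exists>k\<in>W. \<forall>z\<in>W. cinner V z (\<lambda>v. y v - k v) = 0"
proof -
  note W' = subspace_onD[OF W(1)]
  define f where "f k = sqnorm V (\<lambda>v. y v - k v)" for k
  define T where "T = W \<inter> {k. f k \<le> sqnorm V y}"
  have cf: "continuous_on S f" for S
    unfolding f_def sqnorm_def by (intro continuous_intros continuous_on_coordinate)
  have bd: "sqnorm V k \<le> 4 * sqnorm V y" if "k \<in> T" for k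
  proof -
    have "sqnorm V k = sqnorm V (\<lambda>v. y v - (y v - k v))" by simp
    also have "\<dots> \<le> 2 * sqnorm V y + 2 * f k" unfolding f_def by (rule sqnorm_diff_le)
    finally show ?thesis using that unfolding T_def by simp
  qed
  have "closed T" unfolding T_def by (intro closed_Int W(2) closed_Collect_le cf continuous_intros)
  moreover have "(\<lambda>v. 0) \<in> T" unfolding T_def f_def using W'(2) by simp
  ultimately obtain k where kT: "k \<in> T" and kmin: "\<And>x. x \<in> T \<Longrightarrow> f k \<le> f x"
    using continuous_attains_inf_supported[OF fin, of T _ f] W'(1) bd cf unfolding T_def by blast
  have kW: "k \<in> W" using kT unfolding T_def by simp
  have gmin: "f k \<le> f x" if "x \<in> W" for x
    using kmin[of x] kmin[OF \<open>(\<lambda>v. 0) \<in> T\<close>] that unfolding T_def f_def by force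
  have "cinner V z (\<lambda>v. y v - k v) = 0" if "z \<in> W" for z
  proof (rule cinner_eq_0_if_variation_nonneg[where Q = "sqnorm V"])
    fix z t assume z: "z \<in> W"
    have "f k \<le> f (\<lambda>v. k v + complex_of_real (- t) * z v)"
      by (rule gmin[OF W'(3)[OF kW W'(4)[OF z]]])
    also have "\<dots> = sqnorm V (\<lambda>v. (y v - k v) + complex_of_real t * z v)"
      unfolding f_def by (rule arg_cong[where f = "sqnorm V"]) (simp add: fun_eq_iff)
    finally show "2 * t * Re (cinner V z (\<lambda>v. y v - k v)) + t\<^sup>2 * sqnorm V z \<ge> 0"
      unfolding f_def sqnorm_add_scaled by simp
  qed (use W'(4) that in auto)
  then show ?thesis using kW by blast
qed

section \<open>Spectra of symmetric matrices\<close>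

lemma sum_cmod_sq_orthonormal_le_1:
  assumes fin: "finite V" and finF: "finite F" and v: "v \<in> V"
    and on: "\<forall>i\<in>F. \<forall>j\<in>F. cinner V (f i) (f j) = (if i = j then 1 else 0)"
  shows "(\<Sum>i\<in>F. (cmod (f i v))\<^sup>2) \<le> 1"
proof -
  define e where "e = (\<lambda>u. if u = v then (1::complex) else 0)"
  define a where "a i = cinner V (f i) e" for i
  have a_eq: "a i = cnj (f i v)" for i
    unfolding a_def cinner_def e_def using fin v by (simp add: if_distrib cong: if_cong)
  define s where "s = (\<lambda>u. \<Sum>i\<in>F. a i * f i u)"
  have ee: "cinner V e e = 1" unfolding cinner_def e_def using fin v by (simp add: if_distrib cong: if_cong)
  have es: "cinner V e s = (\<Sum>i\<in>F. a i * cnj (a i))"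
    unfolding s_def cinner_sum_right a_def by (metis cinner_commute)
  have se: "cinner V s e = (\<Sum>i\<in>F. cnj (a i) * a i)"
    unfolding s_def cinner_sum_left a_def ..
  have ss: "cinner V s s = (\<Sum>i\<in>F. cnj (a i) * a i)"
    unfolding s_def by (rule cinner_orthonormal[OF finF on])
  have "0 \<le> sqnorm V (\<lambda>u. e u - s u)" by (rule sqnorm_nonneg)
  also have "\<dots> = 1 - Re (\<Sum>i\<in>F. a i * cnj (a i))"
    unfolding sqnorm_eq_Re_cinner cinner_diff_left cinner_diff_right ee es se ss
    by (simp add: mult.commute)
  also have "Re (\<Sum>i\<in>F. a i * cnj (a i)) = (\<Sum>i\<in>F. (cmod (f i v))\<^sup>2)"
    unfolding a_eq Re_sum complex_cnj_cnj by (simp only: Re_cnj_mult)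
  finally show ?thesis by simp
qed

text \<open>Normalised eigenvectors for distinct eigenvalues are orthonormal, and by Bessel's
  inequality there are at most \<open>card V\<close> of them.\<close>
lemma finite_nonzero_eigenvalues:
  assumes fin: "finite V" and sym: "symmetric_mat V M"
  shows "finite (nonzero_eigenvalues V M)"
proof -
  let ?E = "{x::real. is_eigenvalue V M (complex_of_real x)}"
  have bound: "card F \<le> card V" if F: "F \<subseteq> ?E" "finite F" for F
  proof -
    have "\<exists>x. in_eigenspace V M (complex_of_real a) x \<and> sqnorm V x = 1" if a: "a \<in> F" for a
    proof -
      obtain x v where x: "in_eigenspace V M (complex_of_real a) x" "v \<in> V" "x v \<noteq> 0"
        using F a unfolding is_eigenvalue_def by blast
      then have "sqnorm V x \<noteq> 0" using sqnorm_eq_0_iff[OF fin, of x] by blast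
      then show ?thesis using sqnorm_normalize in_eigenspace_scale[OF x(1)] by blast
    qed
    then obtain ev where ev: "\<And>a. a \<in> F \<Longrightarrow> in_eigenspace V M (complex_of_real a) (ev a) \<and> sqnorm V (ev a) = 1"
      by metis
    have on: "\<forall>i\<in>F. \<forall>j\<in>F. cinner V (ev i) (ev j) = (if i = j then 1 else 0)"
    proof (intro ballI)
      fix i j assume i: "i \<in> F" and j: "j \<in> F"
      show "cinner V (ev i) (ev j) = (if i = j then 1 else 0)"
        using ev[OF i] ev[OF j] cinner_eigenvectors_eq_0[OF sym, of i j] by (simp add: cinner_self)
    qed
    have "real (card F) = (\<Sum>i\<in>F. sqnorm V (ev i))" using ev by simp
    also have "\<dots> = (\<Sum>v\<in>V. \<Sum>i\<in>F. (cmod (ev i v))\<^sup>2)"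
      unfolding sqnorm_def by (rule sum.swap)
    also have "\<dots> \<le> (\<Sum>v\<in>V. 1)"
      by (intro sum_mono sum_cmod_sq_orthonormal_le_1[OF fin F(2) _ on])
    also have "\<dots> = real (card V)" by simp
    finally show ?thesis by simp
  qed
  have "finite ?E"
  proof (rule ccontr)
    assume "infinite ?E"
    then obtain F where F: "finite F" "card F = Suc (card V)" "F \<subseteq> ?E"
      using infinite_arbitrarily_large by blast
    from bound[OF F(3,1)] F(2) show False by simp
  qed
  then show ?thesis unfolding nonzero_eigenvalues_def by (rule rev_finite_subset) auto
qed

lemma psd_qform_eq_0_imp_kernel:
  assumes fin: "finite V" and sym: "symmetric_mat V M" and psd: "psd_mat V M"
    and y: "supported V y" and q0: "qform V M y = 0"
  shows "y \<in> mat_kernel V M"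
proof -
  let ?W = "{x. supported V x}"
  have "cinner V z (mat_vec V M y) = 0" if "z \<in> ?W" for z
  proof (rule cinner_eq_0_if_variation_nonneg[where Q = "qform V M"])
    fix z t assume "z \<in> ?W"
    then have "supported V (\<lambda>v. y v + complex_of_real t * z v)"
      using y unfolding supported_def by simp
    then have "qform V M (\<lambda>v. y v + complex_of_real t * z v) \<ge> 0"
      using psd unfolding psd_mat_def by blast
    then show "2 * t * Re (cinner V z (mat_vec V M y)) + t\<^sup>2 * qform V M z \<ge> 0"
      unfolding qform_add_scaled[OF sym] q0 by simp
  qed (use that in \<open>auto simp: supported_def\<close>)
  then have "cinner V (mat_vec V M y) (mat_vec V M y) = 0" using supported_mat_vec by blast
  then have "sqnorm V (mat_vec V M y) = 0" unfolding cinner_self by simp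
  then have "\<forall>v\<in>V. mat_vec V M y v = 0" using sqnorm_eq_0_iff[OF fin] by blast
  then have "mat_vec V M y = (\<lambda>v. 0)" by (auto simp: mat_vec_def)
  then show ?thesis using y unfolding mat_kernel_def by blast
qed

lemma eigenvalue_abs_le_row_sum:
  assumes fin: "finite V" and x: "in_eigenspace V M (complex_of_real \<mu>) x"
    and nz: "v0 \<in> V" "x v0 \<noteq> 0"
    and rows: "\<And>u. u \<in> V \<Longrightarrow> (\<Sum>w\<in>V. \<bar>M u w\<bar>) \<le> B"
  shows "\<bar>\<mu>\<bar> \<le> B"
proof -
  have "Max ((\<lambda>w. cmod (x w)) ` V) \<in> (\<lambda>w. cmod (x w)) ` V" using fin nz(1) by (intro Max_in) auto
  then obtain u where u: "u \<in> V" "cmod (x u) = Max ((\<lambda>w. cmod (x w)) ` V)" by auto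
  then have umax: "\<forall>w\<in>V. cmod (x w) \<le> cmod (x u)" using fin by simp
  have "cmod (x v0) > 0" using nz(2) by simp
  then have pos: "cmod (x u) > 0" using umax nz(1) less_le_trans by blast
  have "\<bar>\<mu>\<bar> * cmod (x u) = cmod (\<Sum>w\<in>V. complex_of_real (M u w) * x w)"
    using x u(1) unfolding in_eigenspace_def by (simp add: norm_mult)
  also have "\<dots> \<le> (\<Sum>w\<in>V. \<bar>M u w\<bar> * cmod (x w))"
    by (rule order.trans[OF norm_sum]) (simp add: norm_mult)
  also have "\<dots> \<le> (\<Sum>w\<in>V. \<bar>M u w\<bar>) * cmod (x u)"
    unfolding sum_distrib_right using umax by (intro sum_mono mult_left_mono) auto
  also have "\<dots> \<le> B * cmod (x u)" using rows[OF u(1)] pos by (simp add: mult_right_mono)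
  finally show ?thesis using pos by simp
qed

lemma sum_shift_row:
  assumes "finite V" "u \<in> V"
  shows "(\<Sum>w\<in>V. complex_of_real (shift M c u w) * x w)
          = (\<Sum>w\<in>V. complex_of_real (M u w) * x w) - complex_of_real c * x u"
proof -
  have "(\<Sum>w\<in>V. complex_of_real (shift M c u w) * x w)
        = (\<Sum>w\<in>V. complex_of_real (M u w) * x w - (if w = u then complex_of_real c * x w else 0))"
    unfolding shift_def by (intro sum.cong refl) (auto simp: algebra_simps)
  also have "\<dots> = (\<Sum>w\<in>V. complex_of_real (M u w) * x w) - complex_of_real c * x u"
    using assms by (simp add: sum_subtractf)
  finally show ?thesis .
qed

lemma in_eigenspace_shift:
  assumes "finite V"
  shows "in_eigenspace V (shift M c) \<mu> x \<longleftrightarrow> in_eigenspace V M (\<mu> + complex_of_real c) x"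
proof -
  have "(\<Sum>w\<in>V. complex_of_real (shift M c u w) * x w) = \<mu> * x u
     \<longleftrightarrow> (\<Sum>w\<in>V. complex_of_real (M u w) * x w) = (\<mu> + complex_of_real c) * x u" if "u \<in> V" for u
    unfolding sum_shift_row[OF assms that] by (auto simp: algebra_simps)
  then show ?thesis unfolding in_eigenspace_def by auto
qed

lemma qform_shift:
  assumes "finite V" "supported V x"
  shows "qform V (shift M c) x = qform V M x - c * sqnorm V x"
proof -
  have "mat_vec V (shift M c) x = (\<lambda>u. mat_vec V M x u - complex_of_real c * x u)"
    using assms unfolding mat_vec_def supported_def by (auto simp: sum_shift_row)
  then show ?thesis
    unfolding qform_def by (simp add: cinner_diff_right cinner_scale_right sqnorm_eq_Re_cinner)
qed

lemma symmetric_mat_shift: "symmetric_mat V M \<Longrightarrow> symmetric_mat V (shift M c)"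
  unfolding symmetric_mat_def shift_def by auto

lemma psd_shift_smallest_eigenvalue:
  assumes fin: "finite V" and sym: "symmetric_mat V M" and sm: "smallest_eigenvalue V M e"
  shows "psd_mat V (shift M e)"
  unfolding psd_mat_def
proof (intro allI impI)
  fix x assume x: "supported V x"
  let ?W = "{x. supported V x}"
  have W: "subspace_on V ?W" unfolding subspace_on_def supported_def by auto
  obtain x0 v0 where x0: "in_eigenspace V M (complex_of_real e) x0" "v0 \<in> V" "x0 v0 \<noteq> 0"
    using sm unfolding smallest_eigenvalue_def is_eigenvalue_def by blast
  have "x0 \<in> ?W" "sqnorm V x0 \<noteq> 0"
    using x0 sqnorm_eq_0_iff[OF fin, of x0] unfolding in_eigenspace_iff_mat_vec by auto
  then obtain y where y: "supported V y" "sqnorm V y = 1"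
    and ey: "mat_vec V M y = (\<lambda>v. complex_of_real (qform V M y) * y v)"
    and lb: "\<forall>x\<in>?W. qform V M x \<ge> qform V M y * sqnorm V x"
    using exists_rayleigh_minimizer[OF fin sym W closed_supported] supported_mat_vec by blast
  have "is_eigenvalue V M (complex_of_real (qform V M y))"
    unfolding is_eigenvalue_def in_eigenspace_iff_mat_vec
    using y ey sqnorm_eq_0_iff[OF fin, of y] by auto
  then have "e \<le> qform V M y" using sm unfolding smallest_eigenvalue_def by force
  then have "e * sqnorm V x \<le> qform V M x"
    using lb x sqnorm_nonneg[of V x] by (smt (verit) mem_Collect_eq mult_right_mono)
  then show "qform V (shift M e) x \<ge> 0" by (simp add: qform_shift[OF fin x])
qed

section \<open>Kernel and spectral gap\<close>

definition mat_kernel_orth :: "'v set \<Rightarrow> ('v \<Rightarrow> 'v \<Rightarrow> real) \<Rightarrow> ('v \<Rightarrow> complex) set" where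
  "mat_kernel_orth V M = {x. supported V x \<and> (\<forall>k\<in>mat_kernel V M. cinner V k x = 0)}"

lemma subspace_on_kernel: "subspace_on V (mat_kernel V M)"
  unfolding subspace_on_def mat_kernel_def supported_def
  by (auto simp: mat_vec_add mat_vec_scale mat_vec_def[of V M "\<lambda>v. 0"])

lemma closed_kernel: "closed (mat_kernel V M)"
proof -
  have "mat_kernel V M = {x. supported V x} \<inter> (\<Inter>u. {x. mat_vec V M x u = 0})"
    unfolding mat_kernel_def by (auto simp: fun_eq_iff)
  moreover have "continuous_on UNIV (\<lambda>x. mat_vec V M x u)" for u
    unfolding mat_vec_def by (cases "u \<in> V") (auto intro!: continuous_intros continuous_on_coordinate)
  ultimately show ?thesis
    by (auto intro!: closed_Int closed_INT closed_supported closed_Collect_eq continuous_intros)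
qed

lemma subspace_on_kernel_orth: "subspace_on V (mat_kernel_orth V M)"
  unfolding subspace_on_def mat_kernel_orth_def supported_def
  by (auto simp: cinner_add_right cinner_scale_right cinner_zero_right)

lemma closed_kernel_orth: "closed (mat_kernel_orth V M)"
proof -
  have "mat_kernel_orth V M = {x. supported V x} \<inter> (\<Inter>k\<in>mat_kernel V M. {x. cinner V k x = 0})"
    unfolding mat_kernel_orth_def by auto
  moreover have "continuous_on UNIV (\<lambda>x. cinner V k x)" for k
    unfolding cinner_def by (intro continuous_intros continuous_on_coordinate)
  ultimately show ?thesis
    by (auto intro!: closed_Int closed_INT closed_supported closed_Collect_eq continuous_intros)
qed

lemma mat_vec_kernel_orth:
  assumes "symmetric_mat V M" "x \<in> mat_kernel_orth V M"
  shows "mat_vec V M x \<in> mat_kernel_orth V M"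
  using assms cinner_mat_vec_symmetric[OF assms(1)] supported_mat_vec
  unfolding mat_kernel_orth_def mat_kernel_def by (simp add: cinner_zero_left)

lemma exists_kernel_decomposition:
  assumes "finite V" "supported V x"
  shows "\<exists>k\<in>mat_kernel V M. (\<lambda>v. x v - k v) \<in> mat_kernel_orth V M"
proof -
  obtain k where k: "k \<in> mat_kernel V M" "\<forall>z\<in>mat_kernel V M. cinner V z (\<lambda>v. x v - k v) = 0"
    using exists_orthogonal_projection[OF assms(1) subspace_on_kernel closed_kernel assms(2)] by blast
  then have "supported V (\<lambda>v. x v - k v)"
    using assms(2) unfolding mat_kernel_def supported_def by simp
  then show ?thesis using k unfolding mat_kernel_orth_def by blast
qed

lemma exists_nonzero_eigenvalue_le_rayleigh:
  assumes fin: "finite V" and sym: "symmetric_mat V M"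
    and x: "x \<in> mat_kernel_orth V M" "sqnorm V x \<noteq> 0"
  shows "\<exists>m\<in>nonzero_eigenvalues V M. m * sqnorm V x \<le> qform V M x"
proof -
  obtain y where y: "y \<in> mat_kernel_orth V M" "sqnorm V y = 1"
    and ey: "mat_vec V M y = (\<lambda>v. complex_of_real (qform V M y) * y v)"
    and lb: "\<forall>x\<in>mat_kernel_orth V M. qform V M y * sqnorm V x \<le> qform V M x"
    using exists_rayleigh_minimizer[OF fin sym subspace_on_kernel_orth closed_kernel_orth
        mat_vec_kernel_orth[OF sym] x] by blast
  have ys: "supported V y" using y(1) unfolding mat_kernel_orth_def by blast
  have "qform V M y \<noteq> 0"
  proof
    assume "qform V M y = 0"
    then have "y \<in> mat_kernel V M" using ys ey unfolding mat_kernel_def by simp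
    then have "cinner V y y = 0" using y(1) unfolding mat_kernel_orth_def by blast
    then show False using y(2) by (simp add: cinner_self)
  qed
  moreover have "is_eigenvalue V M (complex_of_real (qform V M y))"
    unfolding is_eigenvalue_def in_eigenspace_iff_mat_vec
    using ys ey y(2) sqnorm_eq_0_iff[OF fin, of y] by auto
  ultimately show ?thesis using lb x(1) unfolding nonzero_eigenvalues_def by blast
qed

lemma gamma_le:
  assumes "finite V" "symmetric_mat V M" "m \<in> nonzero_eigenvalues V M"
  shows "gamma V M \<le> m"
  unfolding gamma_eq_Min by (intro Min_le finite_nonzero_eigenvalues assms)

lemma gamma_mem_nonzero_eigenvalues:
  assumes "finite V" "symmetric_mat V M" "nonzero_eigenvalues V M \<noteq> {}"
  shows "gamma V M \<in> nonzero_eigenvalues V M"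
  unfolding gamma_eq_Min by (intro Min_in finite_nonzero_eigenvalues assms)

lemma qform_ge_gamma:
  assumes fin: "finite V" and sym: "symmetric_mat V M" and x: "x \<in> mat_kernel_orth V M"
  shows "gamma V M * sqnorm V x \<le> qform V M x"
proof (cases "sqnorm V x = 0")
  case True
  then have "\<forall>v\<in>V. x v = 0" using sqnorm_eq_0_iff[OF fin] by blast
  then show ?thesis using True by (simp add: qform_eq_0_if_zero)
next
  case False
  then obtain m where m: "m \<in> nonzero_eigenvalues V M" "m * sqnorm V x \<le> qform V M x"
    using exists_nonzero_eigenvalue_le_rayleigh[OF fin sym x] by blast
  then have "gamma V M * sqnorm V x \<le> m * sqnorm V x"
    using gamma_le[OF fin sym m(1)] sqnorm_nonneg by (intro mult_right_mono)
  then show ?thesis using m(2) by linarith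
qed

lemma nonzero_eigenvalues_nonempty:
  assumes fin: "finite V" and sym: "symmetric_mat V M"
    and x: "supported V x" "mat_vec V M x \<noteq> (\<lambda>v. 0)"
  shows "nonzero_eigenvalues V M \<noteq> {}"
proof -
  obtain k where k: "k \<in> mat_kernel V M" and r: "(\<lambda>v. x v - k v) \<in> mat_kernel_orth V M"
    using exists_kernel_decomposition[OF fin x(1)] by blast
  have "sqnorm V (\<lambda>v. x v - k v) \<noteq> 0"
  proof
    assume "sqnorm V (\<lambda>v. x v - k v) = 0"
    then have "x = k"
      using sqnorm_eq_0_iff[OF fin] x(1) k unfolding mat_kernel_def by (intro supported_eqI) auto
    then show False using k x(2) unfolding mat_kernel_def by simp
  qed
  then show ?thesis using exists_nonzero_eigenvalue_le_rayleigh[OF fin sym r] by blast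
qed

lemma gamma_nonneg:
  assumes fin: "finite V" and sym: "symmetric_mat V M" and psd: "psd_mat V M"
    and ne: "nonzero_eigenvalues V M \<noteq> {}"
  shows "0 \<le> gamma V M"
proof -
  obtain x v where x: "in_eigenspace V M (complex_of_real (gamma V M)) x" "v \<in> V" "x v \<noteq> 0"
    using gamma_mem_nonzero_eigenvalues[OF fin sym ne]
    unfolding nonzero_eigenvalues_def is_eigenvalue_def by blast
  have "0 \<le> gamma V M * sqnorm V x"
    using psd x(1) qform_eigenvector[OF x(1)] unfolding psd_mat_def in_eigenspace_iff_mat_vec by metis
  moreover have "sqnorm V x > 0" using sqnorm_pos_iff[OF fin] x(2,3) by blast
  ultimately show ?thesis by (simp add: zero_le_mult_iff)
qed

lemma gamma_le_row_sum:
  assumes fin: "finite V" and sym: "symmetric_mat V M" and ne: "nonzero_eigenvalues V M \<noteq> {}"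
    and rows: "\<And>u. u \<in> V \<Longrightarrow> (\<Sum>w\<in>V. \<bar>M u w\<bar>) \<le> B"
  shows "gamma V M \<le> B"
proof -
  obtain x v where "in_eigenspace V M (complex_of_real (gamma V M)) x" "v \<in> V" "x v \<noteq> 0"
    using gamma_mem_nonzero_eigenvalues[OF fin sym ne]
    unfolding nonzero_eigenvalues_def is_eigenvalue_def by blast
  from eigenvalue_abs_le_row_sum[OF fin this rows] show ?thesis by simp
qed

section \<open>The spin lift\<close>

definition diag_proj :: "'v set \<Rightarrow> 'v \<Rightarrow> 'v \<Rightarrow> real" where
  "diag_proj N = (\<lambda>u w. if u = w \<and> u \<in> N then 1 else 0)"

text \<open>\<open>M \<otimes> 1 + \<Pi>\<^sub>N \<otimes> J\<close> with \<open>J\<close> the all-ones \<open>2 \<times> 2\<close> matrix, i.e. \<open>2 \<Pi>\<^sub>+\<close>; the second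
  tensor factor is indexed by \<open>{0, 1}\<close>.\<close>
definition spin_lift :: "('v \<Rightarrow> 'v \<Rightarrow> real) \<Rightarrow> 'v set \<Rightarrow> ('v \<times> nat \<Rightarrow> 'v \<times> nat \<Rightarrow> real)" where
  "spin_lift M N = (\<lambda>(v, a) (w, b). (if a = b then M v w else 0) + diag_proj N v w)"

lemma sum_diag_proj_row:
  assumes "finite V" "u \<in> V"
  shows "(\<Sum>w\<in>V. complex_of_real (diag_proj N u w) * x w) = (if u \<in> N then x u else 0)"
proof -
  have "(\<Sum>w\<in>V. complex_of_real (diag_proj N u w) * x w) = (\<Sum>w\<in>V. if w = u then (if u \<in> N then x u else 0) else 0)"
    unfolding diag_proj_def by (intro sum.cong refl) auto
  also have "\<dots> = (if u \<in> N then x u else 0)" using assms by simp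
  finally show ?thesis .
qed

lemma qform_diag_proj:
  assumes "finite V" "N \<subseteq> V"
  shows "qform V (diag_proj N) x = sqnorm N x"
proof -
  have "(\<Sum>w\<in>V. complex_of_real (diag_proj N u w) * x w) = (if u \<in> N then x u else 0)" if "u \<in> V" for u
    using sum_diag_proj_row[OF assms(1) that] .
  then have "qform V (diag_proj N) x = (\<Sum>u\<in>V. if u \<in> N then (cmod (x u))\<^sup>2 else 0)"
    unfolding qform_eq_sum Re_sum by (intro sum.cong refl) (simp add: cmod_power2 flip: power2_eq_square)
  also have "\<dots> = sqnorm N x"
    unfolding sqnorm_def using assms by (simp add: sum.If_cases Int_absorb1)
  finally show ?thesis .
qed

lemma sum_spin_lift_row:
  assumes fin: "finite V" and v: "v \<in> V" and a: "a \<in> {0, 1}"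
  shows "(\<Sum>w\<in>V \<times> {0, 1}. complex_of_real (spin_lift M N (v, a) w) * x w)
      = (\<Sum>w\<in>V. complex_of_real (M v w) * x (w, a)) + (if v \<in> N then x (v, 0) + x (v, 1) else 0)"
proof -
  have "(\<Sum>w\<in>V \<times> {0, 1}. complex_of_real (spin_lift M N (v, a) w) * x w)
      = (\<Sum>w\<in>V. complex_of_real (M v w) * x (w, a)
          + complex_of_real (diag_proj N v w) * (x (w, 0) + x (w, 1)))"
    unfolding sum.cartesian_product' spin_lift_def using a
    by (intro sum.cong refl) (auto simp: algebra_simps)
  also have "\<dots> = (\<Sum>w\<in>V. complex_of_real (M v w) * x (w, a)) + (if v \<in> N then x (v, 0) + x (v, 1) else 0)"
    unfolding sum.distrib sum_diag_proj_row[OF fin v] ..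
  finally show ?thesis .
qed

lemma symmetric_spin_lift: "symmetric_mat V M \<Longrightarrow> symmetric_mat (V \<times> {0, 1}) (spin_lift M N)"
  unfolding symmetric_mat_def spin_lift_def diag_proj_def by auto

lemma in_eigenspace_spin_lift_antisymmetric:
  assumes fin: "finite V" and y: "in_eigenspace V M \<mu> y"
  shows "in_eigenspace (V \<times> {0, 1}) (spin_lift M N) \<mu>
           (\<lambda>(v, a). if a = 0 then y v else if a = 1 then - y v else 0)"
  unfolding in_eigenspace_def
proof (intro conjI allI impI ballI)
  fix p :: "'a \<times> nat" assume "p \<notin> V \<times> {0, 1}"
  then show "(case p of (v, a) \<Rightarrow> if a = 0 then y v else if a = 1 then - y v else 0) = 0"
    using y unfolding in_eigenspace_def by (cases p) auto
next
  fix p :: "'a \<times> nat" assume "p \<in> V \<times> {0, 1}"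
  then obtain v a where p: "p = (v, a)" "v \<in> V" "a \<in> {0, 1}" by blast
  have "(\<Sum>w\<in>V. complex_of_real (M v w) * (if a = 0 then y w else if a = 1 then - y w else 0))
      = (if a = 0 then 1 else - 1) * (\<mu> * y v)"
    using y p(2,3) unfolding in_eigenspace_def by (auto simp: sum_negf)
  then show "(\<Sum>w\<in>V \<times> {0, 1}. complex_of_real (spin_lift M N p w)
        * (case w of (v, a) \<Rightarrow> if a = 0 then y v else if a = 1 then - y v else 0))
      = \<mu> * (case p of (v, a) \<Rightarrow> if a = 0 then y v else if a = 1 then - y v else 0)"
    unfolding p(1) sum_spin_lift_row[OF fin p(2,3)] using p(3) by auto
qed

lemma spin_lift_eigen_equations:
  assumes fin: "finite V" and x: "in_eigenspace (V \<times> {0, 1}) (spin_lift M N) \<mu> x" and v: "v \<in> V"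
  defines "P \<equiv> if v \<in> N then x (v, 0) + x (v, 1) else 0"
  shows "(\<Sum>w\<in>V. complex_of_real (M v w) * x (w, 0)) + P = \<mu> * x (v, 0)"
    and "(\<Sum>w\<in>V. complex_of_real (M v w) * x (w, 1)) + P = \<mu> * x (v, 1)"
  using x v sum_spin_lift_row[OF fin v, of 0 M N x] sum_spin_lift_row[OF fin v, of 1 M N x]
  unfolding in_eigenspace_def P_def by force+

lemma in_eigenspace_spin_lift_diff:
  assumes fin: "finite V" and x: "in_eigenspace (V \<times> {0, 1}) (spin_lift M N) \<mu> x"
  shows "in_eigenspace V M \<mu> (\<lambda>v. if v \<in> V then x (v, 0) - x (v, 1) else 0)"
  unfolding in_eigenspace_def
proof (intro conjI allI impI ballI)
  fix v assume v: "v \<in> V"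
  note eqs = spin_lift_eigen_equations[OF fin x v]
  have "(\<Sum>w\<in>V. complex_of_real (M v w) * (if w \<in> V then x (w, 0) - x (w, 1) else 0))
      = (\<Sum>w\<in>V. complex_of_real (M v w) * x (w, 0)) - (\<Sum>w\<in>V. complex_of_real (M v w) * x (w, 1))"
    unfolding sum_subtractf[symmetric] by (intro sum.cong refl) (simp add: algebra_simps)
  also have "\<dots> = \<mu> * x (v, 0) - \<mu> * x (v, 1)"
    unfolding eqs(1)[symmetric] eqs(2)[symmetric] by simp
  finally show "(\<Sum>w\<in>V. complex_of_real (M v w) * (if w \<in> V then x (w, 0) - x (w, 1) else 0))
      = \<mu> * (if v \<in> V then x (v, 0) - x (v, 1) else 0)"
    using v by (simp add: right_diff_distrib)
qed simp

lemma in_eigenspace_spin_lift_sum: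
  assumes fin: "finite V" and x: "in_eigenspace (V \<times> {0, 1}) (spin_lift M N) \<mu> x"
  shows "in_eigenspace V (\<lambda>u w. M u w + 2 * diag_proj N u w) \<mu> (\<lambda>v. if v \<in> V then x (v, 0) + x (v, 1) else 0)"
  unfolding in_eigenspace_def
proof (intro conjI allI impI ballI)
  fix v assume v: "v \<in> V"
  note eqs = spin_lift_eigen_equations[OF fin x v]
  let ?y = "\<lambda>w. if w \<in> V then x (w, 0) + x (w, 1) else 0"
  have "(\<Sum>w\<in>V. complex_of_real (M v w + 2 * diag_proj N v w) * ?y w)
      = (\<Sum>w\<in>V. complex_of_real (M v w) * x (w, 0)) + (\<Sum>w\<in>V. complex_of_real (M v w) * x (w, 1))
        + 2 * (\<Sum>w\<in>V. complex_of_real (diag_proj N v w) * ?y w)"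
    unfolding sum.distrib[symmetric] sum_distrib_left by (intro sum.cong refl) (simp add: algebra_simps)
  also have "\<dots> = \<mu> * x (v, 0) + \<mu> * x (v, 1)"
    unfolding eqs(1)[symmetric] eqs(2)[symmetric] sum_diag_proj_row[OF fin v] using v by simp
  finally show "(\<Sum>w\<in>V. complex_of_real (M v w + 2 * diag_proj N v w) * ?y w) = \<mu> * ?y v"
    using v by (simp add: distrib_left)
qed simp

lemma min_ratio_le:
  fixes g s a b p :: real
  assumes "0 \<le> g" "0 \<le> a" "0 \<le> b" "0 < a + b" "0 \<le> p"
    and main: "g * b + 2 * p \<le> s * (a + b)" and p: "a / 16 - b \<le> p"
  shows "min (g / 33) (2 / 33) \<le> s"
proof (cases "a \<le> 32 * b")
  case True
  have "g * (a + b) \<le> g * (33 * b)" using True assms(1) by (intro mult_left_mono) auto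
  then have "g / 33 * (a + b) \<le> s * (a + b)" using main assms(5) by linarith
  then have "g / 33 \<le> s" using assms(4) by (simp add: mult_le_cancel_right)
  then show ?thesis by linarith
next
  case False
  have "0 \<le> g * b" using assms(1,3) by simp
  then have lb: "a / 16 \<le> s * (a + b)" using main p False by linarith
  have a: "0 < a" using False assms(3) by linarith
  have "0 \<le> s"
  proof (rule ccontr)
    assume "\<not> 0 \<le> s"
    then have "s * (a + b) < 0" using assms(4) by (simp add: mult_neg_pos)
    then show False using lb a by linarith
  qed
  then have "s * (a + b) \<le> s * (33 / 32 * a)" using False by (intro mult_left_mono) auto
  then have "2 / 33 * a \<le> s * a" using lb by linarith
  then have "2 / 33 \<le> s" using a by (simp add: mult_le_cancel_right)
  then show ?thesis by linarith
qed

text \<open>Splitting \<open>y = r + k\<close> with \<open>k\<close> in the kernel of \<open>M\<close>: the kernel part is controlled by its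
  mass on \<open>N\<close>, which the eigenvalue equation charges to \<open>\<mu>\<close>, and the rest by the gap of \<open>M\<close>.\<close>
lemma eigenvalue_add_diag_proj_ge:
  assumes fin: "finite V" and NV: "N \<subseteq> V" and sym: "symmetric_mat V M"
    and gamma: "0 \<le> gamma V M"
    and mass: "\<And>k. k \<in> mat_kernel V M \<Longrightarrow> sqnorm V k \<le> 8 * sqnorm N k"
    and y: "in_eigenspace V (\<lambda>u w. M u w + 2 * diag_proj N u w) (complex_of_real \<mu>) y"
    and y0: "sqnorm V y \<noteq> 0"
  shows "min (gamma V M / 33) (2 / 33) \<le> \<mu>"
proof -
  have ys: "supported V y" using y unfolding in_eigenspace_iff_mat_vec by blast
  obtain k where k: "k \<in> mat_kernel V M" and r: "(\<lambda>v. y v - k v) \<in> mat_kernel_orth V M"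
    using exists_kernel_decomposition[OF fin ys] by blast
  define r where "r = (\<lambda>v. y v - k v)"
  have y_eq: "y = (\<lambda>v. r v + complex_of_real 1 * k v)" unfolding r_def by simp
  have Mk: "mat_vec V M k = (\<lambda>v. 0)" and ks: "supported V k"
    using k unfolding mat_kernel_def by auto
  have kr: "cinner V k r = 0" and kMr: "cinner V k (mat_vec V M r) = 0"
    using r mat_vec_kernel_orth[OF sym r] k unfolding r_def mat_kernel_orth_def by auto
  have "qform V M y = qform V M r + 2 * 1 * Re (cinner V k (mat_vec V M r)) + 1\<^sup>2 * qform V M k"
    unfolding y_eq by (rule qform_add_scaled[OF sym])
  also have "\<dots> = qform V M r" using kMr Mk by (simp add: qform_def cinner_zero_right)
  also have "\<dots> \<ge> gamma V M * sqnorm V r"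
    using qform_ge_gamma[OF fin sym] r unfolding r_def by blast
  finally have qy: "gamma V M * sqnorm V r \<le> qform V M y" .
  have "\<mu> * sqnorm V y = qform V M y + 2 * sqnorm N y"
    using qform_eigenvector[OF y] by (simp add: qform_add_mat qform_scale_mat qform_diag_proj[OF fin NV])
  moreover have ny: "sqnorm V y = sqnorm V k + sqnorm V r"
    using kr sqnorm_add_scaled[of V r 1 k] unfolding y_eq[symmetric] by simp
  moreover have "sqnorm N k \<le> 2 * sqnorm N y + 2 * sqnorm N r"
    using sqnorm_diff_le[of N y r] unfolding r_def by simp
  moreover have "sqnorm N r \<le> sqnorm V r"
    unfolding sqnorm_def using NV fin by (intro sum_mono2) auto
  moreover have "0 < sqnorm V k + sqnorm V r" using y0 ny sqnorm_nonneg[of V y] by linarith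
  ultimately show ?thesis
    using min_ratio_le[OF gamma sqnorm_nonneg sqnorm_nonneg _ sqnorm_nonneg, of V k V r N y \<mu>]
      mass[OF k] qy by (simp add: algebra_simps)
qed

lemma nonzero_eigenvalues_spin_lift_nonempty:
  assumes fin: "finite V" and sym: "symmetric_mat V M" and ne: "nonzero_eigenvalues V M \<noteq> {}"
  shows "nonzero_eigenvalues (V \<times> {0, 1}) (spin_lift M N) \<noteq> {}"
proof -
  obtain m y v where "m \<noteq> 0" and y: "in_eigenspace V M (complex_of_real m) y" "v \<in> V" "y v \<noteq> 0"
    using ne unfolding nonzero_eigenvalues_def is_eigenvalue_def by blast
  then have "is_eigenvalue (V \<times> {0, 1}) (spin_lift M N) (complex_of_real m)"
    unfolding is_eigenvalue_def
    using in_eigenspace_spin_lift_antisymmetric[OF fin y(1), of N]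
    by (intro exI[of _ "\<lambda>(v, a). if a = 0 then y v else if a = 1 then - y v else 0"] conjI
        bexI[of _ "(v, 0)"]) auto
  then show ?thesis using \<open>m \<noteq> 0\<close> unfolding nonzero_eigenvalues_def by blast
qed

lemma nonzero_eigenvalue_spin_lift_ge:
  assumes fin: "finite V" and NV: "N \<subseteq> V" and sym: "symmetric_mat V M" and g0: "0 \<le> gamma V M"
    and mass: "\<And>k. k \<in> mat_kernel V M \<Longrightarrow> sqnorm V k \<le> 8 * sqnorm N k"
    and s: "s \<in> nonzero_eigenvalues (V \<times> {0, 1}) (spin_lift M N)"
  shows "min (gamma V M / 33) (2 / 33) \<le> s"
proof -
  obtain x p where x: "in_eigenspace (V \<times> {0, 1}) (spin_lift M N) (complex_of_real s) x"
      and p: "p \<in> V \<times> {0, 1}" "x p \<noteq> 0"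
    using s unfolding nonzero_eigenvalues_def is_eigenvalue_def by blast
  show ?thesis
  proof (cases "\<exists>u\<in>V. x (u, 0) \<noteq> x (u, 1)")
    case True
    then obtain u where "u \<in> V" "x (u, 0) \<noteq> x (u, 1)" by blast
    then have "is_eigenvalue V M (complex_of_real s)"
      unfolding is_eigenvalue_def using in_eigenspace_spin_lift_diff[OF fin x]
      by (intro exI[of _ "\<lambda>v. if v \<in> V then x (v, 0) - x (v, 1) else 0"] conjI bexI[of _ u]) auto
    then have "s \<in> nonzero_eigenvalues V M"
      using s unfolding nonzero_eigenvalues_def by blast
    then have "gamma V M \<le> s" by (rule gamma_le[OF fin sym])
    then show ?thesis using g0 by linarith
  next
    case False
    obtain u a where ua: "p = (u, a)" "u \<in> V" "a \<in> {0, 1}" using p(1) by blast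
    then have "x (u, 0) + x (u, 1) \<noteq> 0" using False p(2) by auto
    then have "sqnorm V (\<lambda>u. if u \<in> V then x (u, 0) + x (u, 1) else 0) \<noteq> 0"
      using sqnorm_eq_0_iff[OF fin] ua(2) by auto
    then show ?thesis
      using eigenvalue_add_diag_proj_ge[OF fin NV sym g0 mass in_eigenspace_spin_lift_sum[OF fin x]] by blast
  qed
qed

lemma gamma_spin_lift_ge:
  assumes fin: "finite V" and NV: "N \<subseteq> V" and sym: "symmetric_mat V M" and psd: "psd_mat V M"
    and ne: "nonzero_eigenvalues V M \<noteq> {}"
    and mass: "\<And>k. k \<in> mat_kernel V M \<Longrightarrow> sqnorm V k \<le> 8 * sqnorm N k"
  shows "min (gamma V M / 33) (2 / 33) \<le> gamma (V \<times> {0, 1}) (spin_lift M N)"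
proof (rule nonzero_eigenvalue_spin_lift_ge[OF fin NV sym gamma_nonneg[OF fin sym psd ne] mass])
  show "gamma (V \<times> {0, 1}) (spin_lift M N) \<in> nonzero_eigenvalues (V \<times> {0, 1}) (spin_lift M N)"
    using fin symmetric_spin_lift[OF sym] nonzero_eigenvalues_spin_lift_nonempty[OF fin sym ne]
    by (intro gamma_mem_nonzero_eigenvalues) auto
qed

section \<open>Gate graphs\<close>

type_synonym gvertex = "nat \<times> nat \<times> nat \<times> nat"

definition node :: "gvertex \<Rightarrow> nat \<times> nat \<times> nat" where
  "node u = (fst u, fst (snd u), fst (snd (snd u)))"

definition jindex :: "gvertex \<Rightarrow> nat" where
  "jindex u = snd (snd (snd u))"

definition adj_blocks :: "(nat \<times> nat \<times> nat \<Rightarrow> nat \<times> nat \<times> nat \<Rightarrow> real) \<Rightarrow> gvertex \<Rightarrow> gvertex \<Rightarrow> real" where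
  "adj_blocks A0 = (\<lambda>u w. if fst u = fst w then A0 (snd u) (snd w) else 0)"

definition hS :: "(nat \<times> nat \<times> nat) set \<Rightarrow> gvertex \<Rightarrow> gvertex \<Rightarrow> real" where
  "hS S = (\<lambda>u w. if u = w \<and> node u \<in> S then 1 else 0)"

definition hE :: "(nat \<times> nat \<times> nat) set set \<Rightarrow> gvertex \<Rightarrow> gvertex \<Rightarrow> real" where
  "hE E = (\<lambda>u w. if jindex u = jindex w \<and> (\<exists>p\<in>E. node u \<in> p \<and> node w \<in> p) then 1 else 0)"

lemma AG_eq: "AG A0 S E = (\<lambda>u w. (adj_blocks A0 u w + hS S u w) + hE E u w)"
proof (intro ext)
  fix u w :: gvertex
  obtain q z t j q' z' t' j' where "u = (q, z, t, j)" "w = (q', z', t', j')" by (cases u, cases w) auto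
  then show "AG A0 S E u w = (adj_blocks A0 u w + hS S u w) + hE E u w"
    by (simp add: AG_def adj_blocks_def hS_def hE_def node_def jindex_def)
qed

lemma VG_eq: "VG R = {1..R} \<times> V0"
  unfolding VG_def V0_def by auto

lemma V0_eq: "V0 = {..<2} \<times> {1..8} \<times> {..<8}"
  unfolding V0_def by auto

lemma finite_V0: "finite V0"
  unfolding V0_eq by simp

lemma card_V0: "card V0 = 128"
  unfolding V0_eq by (simp add: card_cartesian_product)

lemma finite_VG: "finite (VG R)"
  unfolding VG_eq using finite_V0 by simp

lemma finite_diagram_nodes: "finite (diagram_nodes R U)"
proof -
  have "diagram_nodes R U \<subseteq> {1..R} \<times> {..<2} \<times> {..8}"
    unfolding diagram_nodes_def Tset_def by (auto split: gate_label.splits)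
  then show ?thesis by (rule finite_subset) auto
qed

lemma gate_diagram_edge:
  assumes "gate_diagram R U S E" "p \<in> E"
  shows "p \<subseteq> diagram_nodes R U" "card p \<le> 2"
proof -
  have "\<forall>p\<in>E. \<exists>a b. a \<noteq> b \<and> p = {a, b} \<and> a \<in> diagram_nodes R U \<and> b \<in> diagram_nodes R U"
    using assms(1) unfolding gate_diagram_def by (elim conjE)
  then obtain a b where "p = {a, b}" "a \<in> diagram_nodes R U" "b \<in> diagram_nodes R U"
    using assms(2) by blast
  then show "p \<subseteq> diagram_nodes R U" "card p \<le> 2" by (auto simp: card_insert_if)
qed

lemma gate_diagram_edge_unique:
  assumes "gate_diagram R U S E" "p \<in> E" "p' \<in> E" "a \<in> p" "a \<in> p'"
  shows "p = p'"
proof -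
  have "\<forall>p\<in>E. \<forall>p'\<in>E. p \<noteq> p' \<longrightarrow> p \<inter> p' = {}"
    using assms(1) unfolding gate_diagram_def by (elim conjE)
  then show ?thesis using assms(2-5) by blast
qed

lemma finite_gate_diagram_edges:
  assumes "gate_diagram R U S E"
  shows "finite E"
proof -
  have "E \<subseteq> Pow (diagram_nodes R U)" using gate_diagram_edge(1)[OF assms] by blast
  then show "finite E" using finite_diagram_nodes by (simp add: finite_subset)
qed

definition block :: "nat \<Rightarrow> (gvertex \<Rightarrow> complex) \<Rightarrow> nat \<times> nat \<times> nat \<Rightarrow> complex" where
  "block q x = (\<lambda>w. if w \<in> V0 then x (q, w) else 0)"

lemma supported_block: "supported V0 (block q x)"
  unfolding supported_def block_def by auto

lemma sqnorm_VG: "sqnorm (VG R) x = (\<Sum>q\<in>{1..R}. sqnorm V0 (block q x))"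
  unfolding sqnorm_def VG_eq sum.cartesian_product' by (intro sum.cong refl) (simp add: block_def)

lemma qform_adj_blocks: "qform (VG R) (adj_blocks A0) x = (\<Sum>q\<in>{1..R}. qform V0 A0 (block q x))"
proof -
  have row: "(\<Sum>q'\<in>{1..R}. \<Sum>b\<in>V0. complex_of_real (adj_blocks A0 (q, a) (q', b)) * x (q', b))
       = (\<Sum>b\<in>V0. complex_of_real (A0 a b) * block q x b)" if "q \<in> {1..R}" for q a
  proof -
    have "(\<Sum>q'\<in>{1..R}. \<Sum>b\<in>V0. complex_of_real (adj_blocks A0 (q, a) (q', b)) * x (q', b))
        = (\<Sum>q'\<in>{1..R}. if q' = q then (\<Sum>b\<in>V0. complex_of_real (A0 a b) * x (q, b)) else 0)"
      unfolding adj_blocks_def by (intro sum.cong refl) auto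
    also have "\<dots> = (\<Sum>b\<in>V0. complex_of_real (A0 a b) * block q x b)"
      using that by (simp add: block_def)
    finally show ?thesis .
  qed
  have "qform (VG R) (adj_blocks A0) x
     = Re (\<Sum>q\<in>{1..R}. \<Sum>a\<in>V0. cnj (block q x a) * (\<Sum>b\<in>V0. complex_of_real (A0 a b) * block q x b))"
    unfolding qform_eq_sum VG_eq sum.cartesian_product'
  proof (intro arg_cong[where f = Re] sum.cong refl)
    fix q a assume "q \<in> {1..R}" "a \<in> V0"
    then show "cnj (x (q, a)) * (\<Sum>q'\<in>{1..R}. \<Sum>b\<in>V0. complex_of_real (adj_blocks A0 (q, a) (q', b)) * x (q', b))
        = cnj (block q x a) * (\<Sum>b\<in>V0. complex_of_real (A0 a b) * block q x b)"
      unfolding row[OF \<open>q \<in> {1..R}\<close>] by (simp add: block_def)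
  qed
  then show ?thesis unfolding qform_eq_sum Re_sum .
qed

lemma qform_hS_nonneg: "qform (VG R) (hS S) x \<ge> 0"
proof (rule qform_gram_nonneg[OF finite_VG], intro ballI)
  fix u w assume u: "u \<in> VG R"
  have "(\<Sum>i\<in>VG R. (if u = i \<and> node i \<in> S then 1 else 0) * (if w = i \<and> node i \<in> S then 1 else 0))
      = (\<Sum>i\<in>VG R. if i = u then hS S u w else (0::real))"
    unfolding hS_def by (intro sum.cong refl) auto
  also have "\<dots> = hS S u w" using u finite_VG by simp
  finally show "hS S u w = (\<Sum>i\<in>VG R. (if u = i \<and> node i \<in> S then 1 else 0) * (if w = i \<and> node i \<in> S then 1 else 0))"
    by simp
qed

lemma sum_indicator_unique:
  assumes "finite E" "\<And>p p'. p \<in> E \<Longrightarrow> p' \<in> E \<Longrightarrow> P p \<Longrightarrow> P p' \<Longrightarrow> p = p'"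
  shows "(\<Sum>p\<in>E. if P p then (1::real) else 0) = (if \<exists>p\<in>E. P p then 1 else 0)"
proof (cases "\<exists>p\<in>E. P p")
  case True
  then obtain p0 where p0: "p0 \<in> E" "P p0" by blast
  have "(\<Sum>p\<in>E. if P p then (1::real) else 0) = (\<Sum>p\<in>E. if p = p0 then 1 else 0)"
  proof (intro sum.cong refl)
    fix p assume "p \<in> E"
    then have "P p \<longleftrightarrow> p = p0" using assms(2)[of p p0] p0 by blast
    then show "(if P p then (1::real) else 0) = (if p = p0 then 1 else 0)" by simp
  qed
  then show ?thesis using assms(1) p0 True by simp
qed simp

text \<open>Each pair \<open>p\<close> of \<open>E\<close> contributes, for every \<open>j\<close>, the all-ones block on
  \<open>p \<times> {j}\<close>, i.e. the rank-one matrix of the indicator of \<open>p \<times> {j}\<close>.\<close>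
lemma qform_hE_nonneg:
  assumes gd: "gate_diagram R U S E"
  shows "qform (VG R) (hE E) x \<ge> 0"
proof (rule qform_gram_nonneg)
  let ?g = "\<lambda>(p, j) u. if node u \<in> p \<and> jindex u = j then (1::real) else 0"
  show "finite (E \<times> {..<8::nat})" using finite_gate_diagram_edges[OF gd] by simp
  show "\<forall>u\<in>VG R. \<forall>w\<in>VG R. hE E u w = (\<Sum>i\<in>E \<times> {..<8}. ?g i u * ?g i w)"
  proof (intro ballI)
    fix u w assume u: "u \<in> VG R"
    let ?P = "\<lambda>p. node u \<in> p \<and> node w \<in> p \<and> jindex u = jindex w"
    have ju: "jindex u < 8" using u unfolding VG_def jindex_def by auto
    have "(\<Sum>j<8. ?g (p, j) u * ?g (p, j) w) = (if ?P p then 1 else 0)" for p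
    proof -
      have "(\<Sum>j<8. ?g (p, j) u * ?g (p, j) w) = (\<Sum>j<8. if j = jindex u then (if ?P p then 1 else 0) else 0)"
        by (intro sum.cong refl) auto
      then show ?thesis using ju by simp
    qed
    then have "(\<Sum>i\<in>E \<times> {..<8}. ?g i u * ?g i w) = (\<Sum>p\<in>E. if ?P p then 1 else 0)"
      unfolding sum.cartesian_product' by simp
    also have "\<dots> = hE E u w"
      unfolding hE_def
      by (subst sum_indicator_unique[OF finite_gate_diagram_edges[OF gd]])
        (use gate_diagram_edge_unique[OF gd, of _ _ "node u"] in auto)
    finally show "hE E u w = (\<Sum>i\<in>E \<times> {..<8}. ?g i u * ?g i w)" by simp
  qed
qed

abbreviation psi_basis :: "(nat \<times> nat \<times> nat \<Rightarrow> complex) list" where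
  "psi_basis \<equiv> [psi0 0, psi0 1, psi1 0, psi1 1]"

lemma g0_specD:
  assumes "g0_spec A0"
  shows "symmetric_mat V0 A0" "\<And>u w. u \<in> V0 \<Longrightarrow> w \<in> V0 \<Longrightarrow> A0 u w \<in> {0, 1}"
    "\<And>u. u \<in> V0 \<Longrightarrow> A0 u u = 0" "smallest_eigenvalue V0 A0 e1"
    "\<forall>i<4. \<forall>k<4. cinner V0 (psi_basis ! i) (psi_basis ! k) = (if i = k then 1 else 0)"
    "\<And>x. in_eigenspace V0 A0 (complex_of_real e1) x \<Longrightarrow> \<exists>c. x = (\<lambda>v. \<Sum>i<4. c i * (psi_basis ! i) v)"
  using assms unfolding g0_spec_def simple_graph_adj_def symmetric_mat_def Let_def by auto

lemma symmetric_AG: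
  assumes "g0_spec A0"
  shows "symmetric_mat (VG R) (AG A0 S E)"
  using g0_specD(1)[OF assms] unfolding symmetric_mat_def AG_eq VG_eq
  by (auto simp: adj_blocks_def hS_def hE_def)

lemma qform_shift_AG:
  assumes "supported (VG R) x"
  shows "qform (VG R) (shift (AG A0 S E) e1) x
       = (\<Sum>q\<in>{1..R}. qform V0 (shift A0 e1) (block q x)) + qform (VG R) (hS S) x + qform (VG R) (hE E) x"
proof -
  have "(\<Sum>q\<in>{1..R}. qform V0 (shift A0 e1) (block q x))
      = (\<Sum>q\<in>{1..R}. qform V0 A0 (block q x) - e1 * sqnorm V0 (block q x))"
    by (intro sum.cong refl qform_shift[OF finite_V0 supported_block])
  then show ?thesis
    unfolding qform_shift[OF finite_VG assms] AG_eq qform_add_mat qform_adj_blocks sqnorm_VG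
      sum_subtractf sum_distrib_left by simp
qed

text \<open>All three summands of the decomposition are positive semidefinite, so a kernel vector
  of \<open>A(G) - e\<^sub>1\<close> restricts on every diagram element to a kernel vector of \<open>A(g\<^sub>0) - e\<^sub>1\<close>.\<close>
lemma block_kernel_eigenvector:
  assumes g0: "g0_spec A0" and gd: "gate_diagram R U S E"
    and k: "k \<in> mat_kernel (VG R) (shift (AG A0 S E) e1)" and q: "q \<in> {1..R}"
  shows "in_eigenspace V0 A0 (complex_of_real e1) (block q k)"
proof -
  have psd0: "psd_mat V0 (shift A0 e1)"
    using psd_shift_smallest_eigenvalue[OF finite_V0 g0_specD(1,4)[OF g0]] .
  have ks: "supported (VG R) k" and Hk: "mat_vec (VG R) (shift (AG A0 S E) e1) k = (\<lambda>v. 0)"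
    using k unfolding mat_kernel_def by auto
  have nn: "0 \<le> qform V0 (shift A0 e1) (block q' k)" for q'
    using psd0 supported_block unfolding psd_mat_def by blast
  have "qform (VG R) (shift (AG A0 S E) e1) k = 0"
    unfolding qform_def Hk by (simp add: cinner_zero_right)
  moreover have "0 \<le> (\<Sum>q\<in>{1..R}. qform V0 (shift A0 e1) (block q k))"
    by (intro sum_nonneg nn)
  ultimately have "(\<Sum>q\<in>{1..R}. qform V0 (shift A0 e1) (block q k)) = 0"
    using qform_shift_AG[OF ks, of A0 S E] qform_hS_nonneg[of R S k] qform_hE_nonneg[OF gd, of k]
    by linarith
  then have "qform V0 (shift A0 e1) (block q k) = 0"
    using sum_nonneg_eq_0_iff[of "{1..R}" "\<lambda>q. qform V0 (shift A0 e1) (block q k)"] nn q by simp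
  then have "block q k \<in> mat_kernel V0 (shift A0 e1)"
    by (intro psd_qform_eq_0_imp_kernel[OF finite_V0 symmetric_mat_shift[OF g0_specD(1)[OF g0]] psd0
          supported_block])
  then show ?thesis
    unfolding mat_kernel_iff_eigenspace_0 in_eigenspace_shift[OF finite_V0] by simp
qed

section \<open>The \<open>e\<^sub>1\<close>-eigenspace of \<open>g\<^sub>0\<close>\<close>

definition omega8 :: "nat \<Rightarrow> complex" where
  "omega8 j = cis (- pi * real j / 4) / 8"

lemma omega_div_sqrt8: "omega j / complex_of_real (sqrt 8) = omega8 j"
proof -
  have "complex_of_real (sqrt 8) * complex_of_real (sqrt 8) = 8"
    unfolding of_real_mult[symmetric] by simp
  then show ?thesis unfolding omega_def omega8_def by (simp add: divide_divide_eq_left)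
qed

lemma cnj_omega8_mult: "cnj (omega8 j) * omega8 j = 1 / 64"
  unfolding omega8_def using cis_mult[of "pi * real j / 4" "- pi * real j / 4"] by (simp add: cis_cnj)

lemma omega8_mult_self: "omega8 j * omega8 j = (- \<i>) ^ j / 64"
proof -
  have "cis (- pi * real j / 4) * cis (- pi * real j / 4) = cis (real j * (- pi / 2))"
    unfolding cis_mult by (rule arg_cong[where f = cis]) (simp add: field_simps)
  also have "\<dots> = cis (- pi / 2) ^ j" by (rule Complex.DeMoivre[symmetric])
  also have "cis (- pi / 2) = - \<i>" by (simp add: cis.ctr complex_eq_iff)
  finally show ?thesis unfolding omega8_def by simp
qed

text \<open>The phases \<open>\<omega>\<^sub>j\<^sup>2 = (-\<i>)\<^sup>j\<close> sum to zero over \<open>j < 8\<close>, so the components of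
  \<open>\<omega>\<close> and \<open>\<omega>\<^sup>*\<close> do not interfere.\<close>
lemma sum_cmod_sq_omega8_comb:
  "(\<Sum>j<8. (cmod (\<alpha> * omega8 j + \<beta> * cnj (omega8 j)))\<^sup>2) = ((cmod \<alpha>)\<^sup>2 + (cmod \<beta>)\<^sup>2) / 8"
proof -
  have sq: "(\<Sum>j<8. omega8 j * omega8 j) = 0"
    unfolding omega8_mult_self sum_divide_distrib[symmetric] by (simp add: eval_nat_numeral)
  have "(\<Sum>j<8. cnj (omega8 j) * cnj (omega8 j)) = cnj (\<Sum>j<8. omega8 j * omega8 j)"
    by (simp add: cnj_sum)
  then have cnj_sq: "(\<Sum>j<8. cnj (omega8 j) * cnj (omega8 j)) = 0" using sq by simp
  have expand: "cnj (\<alpha> * w + \<beta> * cnj w) * (\<alpha> * w + \<beta> * cnj w)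
      = cnj \<alpha> * \<alpha> * (cnj w * w) + cnj \<alpha> * \<beta> * (cnj w * cnj w)
        + cnj \<beta> * \<alpha> * (w * w) + cnj \<beta> * \<beta> * (cnj w * w)" for w
    by (simp add: algebra_simps)
  have "(\<Sum>j<8. (cmod (\<alpha> * omega8 j + \<beta> * cnj (omega8 j)))\<^sup>2)
      = Re (\<Sum>j<8. cnj \<alpha> * \<alpha> * (cnj (omega8 j) * omega8 j) + cnj \<alpha> * \<beta> * (cnj (omega8 j) * cnj (omega8 j))
             + cnj \<beta> * \<alpha> * (omega8 j * omega8 j) + cnj \<beta> * \<beta> * (cnj (omega8 j) * omega8 j))"
    unfolding Re_sum Re_cnj_mult[symmetric] expand ..
  also have "\<dots> = (Re (cnj \<alpha> * \<alpha>) + Re (cnj \<beta> * \<beta>)) / 8"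
    unfolding sum.distrib sum_distrib_left[symmetric] sq cnj_sq cnj_omega8_mult by (simp add: field_simps)
  finally show ?thesis unfolding Re_cnj_mult .
qed

definition psi_comb :: "(nat \<Rightarrow> complex) \<Rightarrow> nat \<times> nat \<times> nat \<Rightarrow> complex" where
  "psi_comb c = (\<lambda>v. \<Sum>i<4. c i * (psi_basis ! i) v)"

lemma psi_comb_eq: "psi_comb c v = c 0 * psi0 0 v + c 1 * psi0 1 v + c 2 * psi1 0 v + c 3 * psi1 1 v"
  unfolding psi_comb_def by (simp add: eval_nat_numeral)

lemma psi_values:
  assumes "z' < 2" "j < 8" "t \<in> {1..8}"
  shows "psi0 z (z', t, j) = coef z t z' * omega8 j" "psi1 z (z', t, j) = cnj (coef z t z') * cnj (omega8 j)"
  using assms unfolding psi1_def psi0_def V0_def by (simp_all add: omega_div_sqrt8[symmetric] mult.assoc)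

lemma psi_comb_at_5:
  assumes "j < 8"
  shows "psi_comb c (0, 5, j) = c 0 * omega8 j + c 2 * cnj (omega8 j)"
        "psi_comb c (1, 5, j) = c 1 * omega8 j + c 3 * cnj (omega8 j)"
  using assms unfolding psi_comb_eq by (simp_all add: psi_values coef_def)

lemma psi_comb_at_2:
  assumes "j < 8"
  shows "psi_comb c (0, 2, j) = ((c 0 + c 1) / sqrt 2) * omega8 j + ((c 2 + c 3) / sqrt 2) * cnj (omega8 j)"
        "psi_comb c (1, 2, j) = ((c 0 - c 1) / sqrt 2) * omega8 j + ((c 2 - c 3) / sqrt 2) * cnj (omega8 j)"
  using assms unfolding psi_comb_eq by (simp_all add: psi_values coef_def Hm_def field_simps)

lemma sum_cmod_sq_psi_comb:
  assumes "\<And>j. j < 8 \<Longrightarrow> psi_comb c (z, t, j) = \<alpha> * omega8 j + \<beta> * cnj (omega8 j)"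
  shows "(\<Sum>j<8. (cmod (psi_comb c (z, t, j)))\<^sup>2) = ((cmod \<alpha>)\<^sup>2 + (cmod \<beta>)\<^sup>2) / 8"
  using assms by (simp add: sum_cmod_sq_omega8_comb)

text \<open>Positions \<open>t = 5\<close> and \<open>t = 2\<close> carry the qubit vectors \<open>|z\<rangle>\<close> and \<open>H|z\<rangle>\<close>; both
  are orthonormal bases, hence each such position carries exactly one eighth of the mass.\<close>
lemma psi_comb_mass:
  assumes t: "t = 2 \<or> t = 5"
  shows "(\<Sum>z<2. \<Sum>j<8. (cmod (psi_comb c (z, t, j)))\<^sup>2) = (\<Sum>i<4. (cmod (c i))\<^sup>2) / 8"
proof -
  have split: "(\<Sum>z<2. F z) = F 0 + F 1" for F :: "nat \<Rightarrow> real"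
    by (simp add: numeral_2_eq_2)
  have par: "(cmod (a + b))\<^sup>2 + (cmod (a - b))\<^sup>2 = 2 * (cmod a)\<^sup>2 + 2 * (cmod b)\<^sup>2" for a b
    unfolding cmod_power2 by (simp add: power2_eq_square algebra_simps)
  from t show ?thesis
  proof
    assume "t = 2"
    have "(\<Sum>j<8. (cmod (psi_comb c (0, 2, j)))\<^sup>2)
        = ((cmod ((c 0 + c 1) / sqrt 2))\<^sup>2 + (cmod ((c 2 + c 3) / sqrt 2))\<^sup>2) / 8"
      "(\<Sum>j<8. (cmod (psi_comb c (1, 2, j)))\<^sup>2)
        = ((cmod ((c 0 - c 1) / sqrt 2))\<^sup>2 + (cmod ((c 2 - c 3) / sqrt 2))\<^sup>2) / 8"
      by (intro sum_cmod_sq_psi_comb psi_comb_at_2; assumption)+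
    then show ?thesis
      unfolding \<open>t = 2\<close> split using par[of "c 0" "c 1"] par[of "c 2" "c 3"]
      by (simp add: eval_nat_numeral norm_divide power_divide field_simps)
  next
    assume "t = 5"
    have "(\<Sum>j<8. (cmod (psi_comb c (0, 5, j)))\<^sup>2) = ((cmod (c 0))\<^sup>2 + (cmod (c 2))\<^sup>2) / 8"
      "(\<Sum>j<8. (cmod (psi_comb c (1, 5, j)))\<^sup>2) = ((cmod (c 1))\<^sup>2 + (cmod (c 3))\<^sup>2) / 8"
      by (intro sum_cmod_sq_psi_comb psi_comb_at_5; assumption)+
    then show ?thesis
      unfolding \<open>t = 5\<close> split by (simp add: eval_nat_numeral field_simps)
  qed
qed

lemma e1_eigenvector_mass:
  assumes g0: "g0_spec A0" and x: "in_eigenspace V0 A0 (complex_of_real e1) x"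
    and t: "t = 2 \<or> t = 5"
  shows "(\<Sum>z<2. \<Sum>j<8. (cmod (x (z, t, j)))\<^sup>2) = sqnorm V0 x / 8"
proof -
  obtain c where c: "x = psi_comb c" using g0_specD(6)[OF g0 x] unfolding psi_comb_def by blast
  have "cinner V0 (psi_comb c) (psi_comb c) = (\<Sum>i<4. cnj (c i) * c i)"
    unfolding psi_comb_def using g0_specD(5)[OF g0] by (intro cinner_orthonormal) auto
  then have "sqnorm V0 (psi_comb c) = Re (\<Sum>i<4. cnj (c i) * c i)"
    unfolding sqnorm_eq_Re_cinner by simp
  also have "\<dots> = (\<Sum>i<4. (cmod (c i))\<^sup>2)" unfolding Re_sum Re_cnj_mult ..
  finally have "sqnorm V0 (psi_comb c) = (\<Sum>i<4. (cmod (c i))\<^sup>2)" .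
  then show ?thesis unfolding c psi_comb_mass[OF t] by simp
qed

section \<open>Spectral bounds for gate graphs\<close>

text \<open>A position of diagram element \<open>q\<close> that is not a node: \<open>t = 2\<close> for the identity
  (\<open>T(1) = {5, 7}\<close>) and \<open>t = 5\<close> otherwise. In \<open>\<psi>\<close> these positions carry \<open>H|z\<rangle>\<close> and \<open>|z\<rangle>\<close>.\<close>
definition free_pos :: "(nat \<Rightarrow> gate_label) \<Rightarrow> nat \<Rightarrow> nat" where
  "free_pos U q = (if U q = GId then 2 else 5)"

lemma free_pos_mem_Nset:
  assumes gd: "gate_diagram R U S E" and "q \<in> {1..R}" "z < 2" "j < 8"
  shows "(q, z, free_pos U q, j) \<in> Nset R S E"
proof -
  have nn: "(q, z, free_pos U q) \<notin> diagram_nodes R U"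
    unfolding diagram_nodes_def free_pos_def Tset_def by (cases "U q") auto
  moreover have "S \<subseteq> diagram_nodes R U" using gd unfolding gate_diagram_def by (elim conjE)
  ultimately have "(q, z, free_pos U q) \<notin> S" and "\<forall>p\<in>E. (q, z, free_pos U q) \<notin> p"
    using gate_diagram_edge(1)[OF gd] by blast+
  moreover have "(q, z, free_pos U q, j) \<in> VG R"
    using assms(2-4) unfolding VG_def free_pos_def by auto
  ultimately show ?thesis unfolding Nset_def by blast
qed

lemma Nset_subset_VG: "Nset R S E \<subseteq> VG R"
  unfolding Nset_def by auto

lemma kernel_mass_Nset:
  assumes g0: "g0_spec A0" and gd: "gate_diagram R U S E"
    and k: "k \<in> mat_kernel (VG R) (shift (AG A0 S E) e1)"
  shows "sqnorm (VG R) k \<le> 8 * sqnorm (Nset R S E) k"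
proof -
  define D where "D = {1..R} \<times> {..<(2::nat)} \<times> {..<(8::nat)}"
  define f :: "nat \<times> nat \<times> nat \<Rightarrow> gvertex" where "f = (\<lambda>(q, z, j). (q, z, free_pos U q, j))"
  have inj: "inj_on f D" unfolding f_def D_def inj_on_def by auto
  have fD: "f ` D \<subseteq> Nset R S E" unfolding f_def D_def using free_pos_mem_Nset[OF gd] by auto
  have blockwise: "sqnorm V0 (block q k) = 8 * (\<Sum>z<2. \<Sum>j<8. (cmod (k (q, z, free_pos U q, j)))\<^sup>2)"
    if q: "q \<in> {1..R}" for q
  proof -
    have t: "free_pos U q = 2 \<or> free_pos U q = 5" unfolding free_pos_def by auto
    then have "block q k (z, free_pos U q, j) = k (q, z, free_pos U q, j)" if "z < 2" "j < 8" for z j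
      using that unfolding block_def V0_def by auto
    then have "(\<Sum>z<2. \<Sum>j<8. (cmod (k (q, z, free_pos U q, j)))\<^sup>2)
        = (\<Sum>z<2. \<Sum>j<8. (cmod (block q k (z, free_pos U q, j)))\<^sup>2)"
      by (intro sum.cong refl) auto
    also have "\<dots> = sqnorm V0 (block q k) / 8"
      by (rule e1_eigenvector_mass[OF g0 block_kernel_eigenvector[OF g0 gd k q] t])
    finally show ?thesis by simp
  qed
  have "sqnorm (VG R) k = 8 * (\<Sum>q\<in>{1..R}. \<Sum>z<2. \<Sum>j<8. (cmod (k (q, z, free_pos U q, j)))\<^sup>2)"
    unfolding sqnorm_VG sum_distrib_left[of 8 "\<lambda>q. \<Sum>z<2. \<Sum>j<8. (cmod (k (q, z, free_pos U q, j)))\<^sup>2"]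
    by (intro sum.cong refl blockwise)
  also have "(\<Sum>q\<in>{1..R}. \<Sum>z<2. \<Sum>j<8. (cmod (k (q, z, free_pos U q, j)))\<^sup>2) = sqnorm (f ` D) k"
    unfolding sqnorm_def sum.reindex[OF inj] comp_def
    unfolding D_def f_def sum.cartesian_product' by simp
  also have "\<dots> \<le> sqnorm (Nset R S E) k"
    unfolding sqnorm_def using fD finite_subset[OF Nset_subset_VG finite_VG] by (intro sum_mono2) auto
  finally show ?thesis by simp
qed

lemma e1_neg: "e1 < 0" and abs_e1_le: "\<bar>e1\<bar> \<le> 7"
proof -
  have "sqrt 2 < 2" "0 \<le> sqrt 2" using real_sqrt_less_mono[of 2 4] by simp_all
  then show neg: "e1 < 0" unfolding e1_def by linarith
  then show "\<bar>e1\<bar> \<le> 7" using \<open>sqrt 2 < 2\<close> unfolding e1_def by (subst abs_of_neg) linarith+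
qed

lemma row_sum_adj_blocks:
  assumes g0: "g0_spec A0" and u: "u \<in> VG R"
  shows "(\<Sum>w\<in>VG R. \<bar>adj_blocks A0 u w\<bar>) \<le> 128"
proof -
  obtain q a where ua: "u = (q, a)" "q \<in> {1..R}" "a \<in> V0" using u unfolding VG_eq by auto
  have "(\<Sum>w\<in>VG R. \<bar>adj_blocks A0 u w\<bar>) = (\<Sum>q'\<in>{1..R}. if q' = q then (\<Sum>b\<in>V0. \<bar>A0 a b\<bar>) else 0)"
    unfolding ua VG_eq sum.cartesian_product' adj_blocks_def by (intro sum.cong refl) auto
  also have "\<dots> = (\<Sum>b\<in>V0. \<bar>A0 a b\<bar>)" using ua(2) by simp
  also have "\<dots> \<le> (\<Sum>b\<in>V0. 1)"
    using g0_specD(2)[OF g0 ua(3)] by (intro sum_mono) fastforce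
  finally show ?thesis using card_V0 by simp
qed

lemma row_sum_hS:
  assumes "u \<in> VG R"
  shows "(\<Sum>w\<in>VG R. hS S u w) \<le> 1"
proof -
  have "(\<Sum>w\<in>VG R. hS S u w) = (\<Sum>w\<in>VG R. if w = u then hS S u u else 0)"
    unfolding hS_def by (intro sum.cong refl) auto
  then show ?thesis using assms finite_VG by (simp add: hS_def)
qed

lemma row_sum_hE:
  assumes gd: "gate_diagram R U S E" and u: "u \<in> VG R"
  shows "(\<Sum>w\<in>VG R. hE E u w) \<le> 2"
proof (cases "\<exists>p\<in>E. node u \<in> p")
  case False
  then show ?thesis unfolding hE_def by simp
next
  case True
  then obtain p where p: "p \<in> E" "node u \<in> p" by blast
  have finp: "finite p" using gate_diagram_edge(1)[OF gd p(1)] finite_diagram_nodes finite_subset by blast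
  define lift where "lift n = (fst n, fst (snd n), snd (snd n), jindex u)" for n :: "nat \<times> nat \<times> nat"
  have "hE E u w \<le> (if w \<in> lift ` p then 1 else 0)" for w
  proof (cases "hE E u w = 0")
    case False
    then obtain p' where p': "p' \<in> E" "node u \<in> p'" "node w \<in> p'" and "jindex u = jindex w"
      unfolding hE_def by (auto split: if_splits)
    then have "w = lift (node w)" "node w \<in> p"
      using gate_diagram_edge_unique[OF gd p'(1) p(1) p'(2) p(2)]
      unfolding lift_def node_def jindex_def by (cases w, auto)
    then show ?thesis unfolding hE_def by (auto split: if_splits)
  qed (simp add: hE_def)
  then have "(\<Sum>w\<in>VG R. hE E u w) \<le> (\<Sum>w\<in>VG R. if w \<in> lift ` p then 1 else 0)"
    by (intro sum_mono)
  also have "\<dots> = real (card (VG R \<inter> lift ` p))"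
    using finite_VG by (simp add: sum.If_cases)
  also have "\<dots> \<le> card p"
    using card_mono[of "lift ` p" "VG R \<inter> lift ` p"] card_image_le[OF finp, of lift] finp by simp
  also have "\<dots> \<le> 2" using gate_diagram_edge(2)[OF gd p(1)] by simp
  finally show ?thesis .
qed

lemma row_sum_shift_AG:
  assumes g0: "g0_spec A0" and gd: "gate_diagram R U S E" and u: "u \<in> VG R"
  shows "(\<Sum>w\<in>VG R. \<bar>shift (AG A0 S E) e1 u w\<bar>) \<le> 138"
proof -
  have "(\<Sum>w\<in>VG R. \<bar>shift (AG A0 S E) e1 u w\<bar>)
      \<le> (\<Sum>w\<in>VG R. \<bar>adj_blocks A0 u w\<bar> + hS S u w + hE E u w + (if w = u then \<bar>e1\<bar> else 0))"
    unfolding shift_def AG_eq by (intro sum_mono) (auto simp: hS_def hE_def)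
  also have "\<dots> = (\<Sum>w\<in>VG R. \<bar>adj_blocks A0 u w\<bar>) + (\<Sum>w\<in>VG R. hS S u w) + (\<Sum>w\<in>VG R. hE E u w) + \<bar>e1\<bar>"
    using u finite_VG by (simp add: sum.distrib)
  also have "\<dots> \<le> 128 + 1 + 2 + 7"
    using row_sum_adj_blocks[OF g0 u] row_sum_hS[OF u, of S] row_sum_hE[OF gd u] abs_e1_le by linarith
  finally show ?thesis by simp
qed

lemma shift_AG_diag_pos:
  assumes g0: "g0_spec A0" and u: "u \<in> VG R"
  shows "shift (AG A0 S E) e1 u u > 0"
proof -
  have "adj_blocks A0 u u = 0" using g0_specD(3)[OF g0] u unfolding adj_blocks_def VG_eq by auto
  then show ?thesis unfolding shift_def AG_eq using e1_neg by (simp add: hS_def hE_def)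
qed

lemma psd_shift_AG:
  assumes "g0_spec A0" "e1_gate_graph A0 R S E"
  shows "psd_mat (VG R) (shift (AG A0 S E) e1)"
  using psd_shift_smallest_eigenvalue[OF finite_VG symmetric_AG[OF assms(1)]] assms(2)
  unfolding e1_gate_graph_def by blast

lemma nonzero_eigenvalues_shift_AG:
  assumes g0: "g0_spec A0" and G: "e1_gate_graph A0 R S E"
  shows "nonzero_eigenvalues (VG R) (shift (AG A0 S E) e1) \<noteq> {}"
proof -
  obtain u where u: "u \<in> VG R"
    using G unfolding e1_gate_graph_def smallest_eigenvalue_def is_eigenvalue_def by blast
  define x where "x = (\<lambda>v. if v = u then (1::complex) else 0)"
  have "mat_vec (VG R) (shift (AG A0 S E) e1) x u = complex_of_real (shift (AG A0 S E) e1 u u)"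
    unfolding mat_vec_apply[OF u] x_def using finite_VG u by (simp add: if_distrib cong: if_cong)
  then have "mat_vec (VG R) (shift (AG A0 S E) e1) x \<noteq> (\<lambda>v. 0)"
    using shift_AG_diag_pos[OF g0 u, of S E] by (metis of_real_eq_0_iff less_irrefl)
  moreover have "supported (VG R) x" using u unfolding x_def supported_def by simp
  ultimately show ?thesis
    using nonzero_eigenvalues_nonempty[OF finite_VG symmetric_mat_shift[OF symmetric_AG[OF g0]]] by blast
qed

lemma shift_ASL_eq_spin_lift:
  "shift (ASL A0 R S E) e1 = spin_lift (shift (AG A0 S E) e1) (Nset R S E)"
  by (auto simp: fun_eq_iff shift_def ASL_def spin_lift_def diag_proj_def)

theorem lemma2:
  fixes A0 :: "nat \<times> nat \<times> nat \<Rightarrow> nat \<times> nat \<times> nat \<Rightarrow> real"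
  assumes "g0_spec A0"
  shows "\<exists>C>0. \<forall>R U S E. gate_diagram R U S E \<and> e1_gate_graph A0 R S E \<longrightarrow>
           gamma (VSL R) (shift (ASL A0 R S E) e1) \<ge> C * gamma (VG R) (shift (AG A0 S E) e1)"
proof (intro exI[of _ "2 / (33 * 138)"] conjI allI impI)
  fix R U S E assume "gate_diagram R U S E \<and> e1_gate_graph A0 R S E"
  then have gd: "gate_diagram R U S E" and G: "e1_gate_graph A0 R S E" by auto
  let ?H = "shift (AG A0 S E) e1"
  have sym: "symmetric_mat (VG R) ?H" by (rule symmetric_mat_shift[OF symmetric_AG[OF assms]])
  note ne = nonzero_eigenvalues_shift_AG[OF assms G]
  have "gamma (VG R) ?H \<le> 138"
    by (rule gamma_le_row_sum[OF finite_VG sym ne row_sum_shift_AG[OF assms gd]])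
  moreover have "0 \<le> gamma (VG R) ?H"
    by (rule gamma_nonneg[OF finite_VG sym psd_shift_AG[OF assms G] ne])
  ultimately have "2 / (33 * 138) * gamma (VG R) ?H \<le> min (gamma (VG R) ?H / 33) (2 / 33)"
    by (simp add: min_def)
  moreover have "min (gamma (VG R) ?H / 33) (2 / 33) \<le> gamma (VSL R) (shift (ASL A0 R S E) e1)"
    unfolding VSL_def shift_ASL_eq_spin_lift
    by (rule gamma_spin_lift_ge[OF finite_VG Nset_subset_VG sym psd_shift_AG[OF assms G] ne
          kernel_mass_Nset[OF assms gd]])
  ultimately show "gamma (VSL R) (shift (ASL A0 R S E) e1) \<ge> 2 / (33 * 138) * gamma (VG R) ?H"
    by linarith
qed simp

end
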